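(* Let $R(x,t)>0$, $V_x(x,r,t)$, $V_r(x,r,t)$ be smooth on $\{0\le r\le R(x,t)\}$, and assume the incompressibility condition $\frac{\partial (rV_r)}{\partial r}+r\frac{\partial V_x}{\partial x}=0$ and the streamline boundary condition $\frac{\partial R}{\partial t}+V_x|_{r=R}\frac{\partial R}{\partial x}=V_r|_{r=R}$. Let $D>0$, let $C(x,t)$ be smooth, define $\eta$, $\tilde\eta=\eta-\langle\eta\rangle$ and $\tilde V_x = V_x-\langle V_x\rangle$ as in the context. Suppose $G_2=G_2(x,t)$ (independent of $r$) and a smooth function $W_2(x,r,t)$ with $r\,\partial W_2/\partial r\to 0$ as $r\to0$ and $\frac{\partial W_2}{\partial r}(x,R(x,t),t)=0$ satisfy $$\mathcal{L}W_2 = \frac{\partial}{\partial t}\Big(\frac{\partial C}{\partial x}\tilde\eta\Big) + G_2 - \tilde\eta\,\frac{\partial}{\partial x}\Big(\frac{\partial C}{\partial x}\langle V_x\rangle\Big) + V_x\frac{\partial}{\partial x}\Big(\frac{\partial C}{\partial x}\tilde\eta\Big) + V_r\,\frac{\partial C}{\partial x}\,\frac{\partial\tilde\eta}{\partial r}.$$ Then necessarily $$G_2 = -\frac{1}{R^2}\frac{\partial}{\partial x}\Big(\frac{\partial C}{\partial x}\,\big\langle R^2\,\eta\,\tilde V_x\big\rangle\Big).$$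
   Context: Cylindrical coordinates $(x,r,\theta)$ with axial symmetry, vessel radius $R(x,t)$; $\mathcal{L}f = D\left(\frac{\partial^2 f}{\partial r^2}+\frac1r\frac{\partial f}{\partial r}\right)$. Radial average: $\langle f\rangle(x,t)=\frac{2}{R^2}\int_0^{R} f(x,r,t)\,r\,dr$. $\eta(x,r,t)=\frac{1}{D}\int_0^r\frac{1}{z}\int_0^z\big(V_x(x,s,t)-\langle V_x\rangle(x,t)\big)s\,ds\,dz$. (The right-hand side of the equation for $W_2$ is what one obtains from the second equation of the center manifold hierarchy with $W_0=C$, $W_1=\frac{\partial C}{\partial x}\tilde\eta$, $G_1=-\langle V_x\rangle\frac{\partial C}{\partial x}$.) *)

theory Defs
  imports "HOL-Analysis.Analysis"
begin

text \<open>Iterated directional (Frechet) derivatives and C^infinity on a set U (intended: U open):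
  all iterated partial derivatives exist, i.e. are differentiable at each point of U.\<close>
fun iter_dderiv :: "'a::real_normed_vector list \<Rightarrow> ('a \<Rightarrow> real) \<Rightarrow> 'a \<Rightarrow> real" where
  "iter_dderiv [] f = f"
| "iter_dderiv (v # vs) f = (\<lambda>p. frechet_derivative (iter_dderiv vs f) (at p) v)"

definition smooth_on :: "('a::euclidean_space \<Rightarrow> real) \<Rightarrow> 'a set \<Rightarrow> bool" where
  "smooth_on f U \<longleftrightarrow> (\<forall>vs \<in> lists Basis. \<forall>p\<in>U. iter_dderiv vs f differentiable (at p))"

definition smooth_near :: "('a::euclidean_space \<Rightarrow> real) \<Rightarrow> 'a set \<Rightarrow> bool" where
  "smooth_near f S \<longleftrightarrow> (\<exists>U. open U \<and> S \<subseteq> U \<and> smooth_on f U)"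

definition pdx :: "(real \<Rightarrow> real \<Rightarrow> real \<Rightarrow> real) \<Rightarrow> real \<Rightarrow> real \<Rightarrow> real \<Rightarrow> real" where
  "pdx f x r t = deriv (\<lambda>y. f y r t) x"
definition pdr :: "(real \<Rightarrow> real \<Rightarrow> real \<Rightarrow> real) \<Rightarrow> real \<Rightarrow> real \<Rightarrow> real \<Rightarrow> real" where
  "pdr f x r t = deriv (\<lambda>s. f x s t) r"
definition pdt :: "(real \<Rightarrow> real \<Rightarrow> real \<Rightarrow> real) \<Rightarrow> real \<Rightarrow> real \<Rightarrow> real \<Rightarrow> real" where
  "pdt f x r t = deriv (\<lambda>s. f x r s) t"
definition pdx2 :: "(real \<Rightarrow> real \<Rightarrow> real) \<Rightarrow> real \<Rightarrow> real \<Rightarrow> real" where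
  "pdx2 f x t = deriv (\<lambda>y. f y t) x"
definition pdt2 :: "(real \<Rightarrow> real \<Rightarrow> real) \<Rightarrow> real \<Rightarrow> real \<Rightarrow> real" where
  "pdt2 f x t = deriv (\<lambda>s. f x s) t"

definition Lop :: "real \<Rightarrow> (real \<Rightarrow> real \<Rightarrow> real \<Rightarrow> real) \<Rightarrow> real \<Rightarrow> real \<Rightarrow> real \<Rightarrow> real" where
  "Lop D f x r t = D * (pdr (pdr f) x r t + (1 / r) * pdr f x r t)"

definition ravg :: "(real \<Rightarrow> real \<Rightarrow> real) \<Rightarrow> (real \<Rightarrow> real \<Rightarrow> real \<Rightarrow> real) \<Rightarrow> real \<Rightarrow> real \<Rightarrow> real" where
  "ravg R f x t = 2 / (R x t)^2 * integral {0..R x t} (\<lambda>r. f x r t * r)"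

definition eta :: "real \<Rightarrow> (real \<Rightarrow> real \<Rightarrow> real) \<Rightarrow> (real \<Rightarrow> real \<Rightarrow> real \<Rightarrow> real) \<Rightarrow> real \<Rightarrow> real \<Rightarrow> real \<Rightarrow> real" where
  "eta D R Vx x r t = (1 / D) * integral {0..r}
      (\<lambda>z. (1 / z) * integral {0..z} (\<lambda>s. (Vx x s t - ravg R Vx x t) * s))"

end

theory Submission
  imports Defs
begin

text \<open>
Multiply the equation for W2 by r and integrate over the cross-section 0 <= r <= R. The left-hand side
integrates to D [r W2_r] between 0 and R, which vanishes at both ends. On the right, eta~ = eta - <eta>
has zero mean, so differentiating the vanishing integral of r eta~ in t across the moving wall gives
int r eta~_t = - R_t R eta~(R). The V_r term is integrated by parts in r using incompressibility, and
the V_x term is absorbed into the x-derivative of the flux K = int r V_x eta~, again by Leibniz's rule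
on the moving wall. The wall contributions add up to R eta~(R) (V_r - R_t - R_x V_x) at r = R, which
vanishes by the streamline condition, leaving G2 R^2 / 2 + d/dx (C_x K) = 0 with K = <R^2 eta V~_x> / 2.

The weight 1/z in the definition of eta is harmless: rescaling the inner integrals to [0, 1] writes eta
as a regular function of r that is continuously differentiable in x and t, which is what the
differentiations under the integral sign need.
\<close>

section \<open>Smooth functions and their partial derivatives\<close>

lemma iter_dderiv_append: "iter_dderiv vs (iter_dderiv ws f) = iter_dderiv (vs @ ws) f"
  by (induction vs) auto

lemma smooth_on_imp_differentiable: "smooth_on f U \<Longrightarrow> p \<in> U \<Longrightarrow> f differentiable (at p)"
  unfolding smooth_on_def by (metis iter_dderiv.simps(1) lists.Nil)

lemma smooth_on_imp_continuous_on: "smooth_on f U \<Longrightarrow> open U \<Longrightarrow> continuous_on U f"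
  by (metis continuous_at_imp_continuous_on differentiable_imp_continuous_within
      smooth_on_imp_differentiable)

lemma smooth_on_subset: "smooth_on f U \<Longrightarrow> V \<subseteq> U \<Longrightarrow> smooth_on f V"
  unfolding smooth_on_def by blast

lemma smooth_on_directional_derivative:
  assumes "smooth_on f U" "v \<in> Basis"
  shows "smooth_on (\<lambda>p. frechet_derivative f (at p) v) U"
  unfolding smooth_on_def
proof (intro ballI)
  fix vs :: "'a list" and p assume "vs \<in> lists Basis" "p \<in> U"
  then have "iter_dderiv (vs @ [v]) f differentiable (at p)"
    using assms unfolding smooth_on_def by auto
  moreover have "(\<lambda>p. frechet_derivative f (at p) v) = iter_dderiv [v] f"
    by simp
  ultimately show "iter_dderiv vs (\<lambda>p. frechet_derivative f (at p) v) differentiable (at p)"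
    by (simp only: iter_dderiv_append)
qed

lemma frechet_derivative_cong_open:
  assumes "open U" "p \<in> U" "\<And>q. q \<in> U \<Longrightarrow> f q = g q"
  shows "frechet_derivative f (at p) = frechet_derivative g (at p)"
proof -
  have "(f has_derivative f') (at p) \<longleftrightarrow> (g has_derivative f') (at p)" for f'
  proof
    show "(g has_derivative f') (at p)" if "(f has_derivative f') (at p)"
      using that assms by (rule has_derivative_transform_within_open) auto
    show "(f has_derivative f') (at p)" if "(g has_derivative f') (at p)"
      using that assms(1,2) by (rule has_derivative_transform_within_open) (use assms(3) in auto)
  qed
  then show ?thesis unfolding frechet_derivative_def by simp
qed

lemma smooth_on_cong:
  assumes "smooth_on f U" "open U" "\<And>p. p \<in> U \<Longrightarrow> f p = g p"
  shows "smooth_on g U"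
proof -
  have eq: "iter_dderiv vs f p = iter_dderiv vs g p" if "p \<in> U" for vs p
    using that
  proof (induction vs arbitrary: p)
    case (Cons v vs)
    then show ?case
      using frechet_derivative_cong_open[OF assms(2) Cons.prems, of "iter_dderiv vs f" "iter_dderiv vs g"]
        Cons.IH by simp
  qed (use assms in simp)
  show ?thesis
    unfolding smooth_on_def
  proof (intro ballI)
    fix vs :: "'a list" and p assume "vs \<in> lists Basis" "p \<in> U"
    then obtain f' where "(iter_dderiv vs f has_derivative f') (at p)"
      using assms(1) unfolding smooth_on_def differentiable_def by blast
    then have "(iter_dderiv vs g has_derivative f') (at p)"
      using has_derivative_transform_within_open assms(2) \<open>p \<in> U\<close> eq by blast
    then show "iter_dderiv vs g differentiable (at p)"
      unfolding differentiable_def by blast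
  qed
qed

lemma has_real_derivative_along_line:
  fixes f :: "'a::real_normed_vector \<Rightarrow> real"
  assumes "f differentiable (at (a + s *\<^sub>R v))"
  shows "((\<lambda>s. f (a + s *\<^sub>R v)) has_real_derivative frechet_derivative f (at (a + s *\<^sub>R v)) v) (at s)"
proof -
  let ?f' = "frechet_derivative f (at (a + s *\<^sub>R v))"
  have f': "(f has_derivative ?f') (at (a + s *\<^sub>R v))"
    using assms frechet_derivative_works by blast
  have "((\<lambda>s. a + s *\<^sub>R v) has_derivative (\<lambda>h. h *\<^sub>R v)) (at s)"
    by (auto intro!: derivative_eq_intros)
  from has_derivative_compose[OF this f']
  have "((\<lambda>s. f (a + s *\<^sub>R v)) has_derivative (\<lambda>h. h * ?f' v)) (at s)"
    using linear_scale[OF has_derivative_linear[OF f']] by (simp add: o_def)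
  moreover have "(\<lambda>h. h * ?f' v) = (*) (?f' v)"
    by (rule ext) (simp add: mult.commute)
  ultimately show ?thesis
    by (simp add: has_field_derivative_def)
qed

lemma frechet_derivative_along_line:
  fixes f :: "'a::real_normed_vector \<Rightarrow> real"
  assumes "f differentiable (at (a + s *\<^sub>R v))"
  shows "frechet_derivative f (at (a + s *\<^sub>R v)) v = deriv (\<lambda>s. f (a + s *\<^sub>R v)) s"
  by (rule DERIV_imp_deriv[OF has_real_derivative_along_line[OF assms], symmetric])

lemma smooth_on_partial_derivative:
  assumes "smooth_on f U" "open U" "v \<in> Basis"
    and "\<And>p. p \<in> U \<Longrightarrow> frechet_derivative f (at p) v = g p"
  shows "smooth_on g U"
  using smooth_on_cong[OF smooth_on_directional_derivative[OF assms(1,3)] assms(2)] assms(4) .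

lemma has_real_derivative_pdx:
  "(\<lambda>(x, r, t). f x r t) differentiable (at (x, r, t)) \<Longrightarrow>
   ((\<lambda>y. f y r t) has_real_derivative pdx f x r t) (at x)"
  unfolding pdx_def DERIV_deriv_iff_real_differentiable
  using differentiable_compose[of "\<lambda>(x, r, t). f x r t" "\<lambda>y. (y, r, t)" x UNIV] by simp

lemma has_real_derivative_pdr:
  "(\<lambda>(x, r, t). f x r t) differentiable (at (x, r, t)) \<Longrightarrow>
   ((\<lambda>s. f x s t) has_real_derivative pdr f x r t) (at r)"
  unfolding pdr_def DERIV_deriv_iff_real_differentiable
  using differentiable_compose[of "\<lambda>(x, r, t). f x r t" "\<lambda>s. (x, s, t)" r UNIV] by simp

lemma has_real_derivative_pdt:
  "(\<lambda>(x, r, t). f x r t) differentiable (at (x, r, t)) \<Longrightarrow>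
   ((\<lambda>s. f x r s) has_real_derivative pdt f x r t) (at t)"
  unfolding pdt_def DERIV_deriv_iff_real_differentiable
  using differentiable_compose[of "\<lambda>(x, r, t). f x r t" "\<lambda>s. (x, r, s)" t UNIV] by simp

lemma has_real_derivative_pdx2:
  "(\<lambda>(x, t). f x t) differentiable (at (x, t)) \<Longrightarrow>
   ((\<lambda>y. f y t) has_real_derivative pdx2 f x t) (at x)"
  unfolding pdx2_def DERIV_deriv_iff_real_differentiable
  using differentiable_compose[of "\<lambda>(x, t). f x t" "\<lambda>y. (y, t)" x UNIV] by simp

lemma has_real_derivative_pdt2:
  "(\<lambda>(x, t). f x t) differentiable (at (x, t)) \<Longrightarrow>
   ((\<lambda>s. f x s) has_real_derivative pdt2 f x t) (at t)"
  unfolding pdt2_def DERIV_deriv_iff_real_differentiable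
  using differentiable_compose[of "\<lambda>(x, t). f x t" "\<lambda>s. (x, s)" t UNIV] by simp

lemma smooth_on_pdx:
  assumes "smooth_on (\<lambda>(x, r, t). f x r t) U" "open U"
  shows "smooth_on (\<lambda>(x, r, t). pdx f x r t) U"
proof (rule smooth_on_partial_derivative[OF assms, of "(1, 0, 0)"])
  fix p assume "p \<in> U"
  moreover obtain x r t where "p = (x, r, t)" by (metis prod.exhaust)
  ultimately show "frechet_derivative (\<lambda>(x, r, t). f x r t) (at p) (1, 0, 0) = (\<lambda>(x, r, t). pdx f x r t) p"
    using frechet_derivative_along_line[of "\<lambda>(x, r, t). f x r t" "(0, r, t)" x "(1, 0, 0)"]
      smooth_on_imp_differentiable[OF assms(1)] by (simp add: pdx_def)
qed (simp add: Basis_prod_def zero_prod_def)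

lemma smooth_on_pdr:
  assumes "smooth_on (\<lambda>(x, r, t). f x r t) U" "open U"
  shows "smooth_on (\<lambda>(x, r, t). pdr f x r t) U"
proof (rule smooth_on_partial_derivative[OF assms, of "(0, 1, 0)"])
  fix p assume "p \<in> U"
  moreover obtain x r t where "p = (x, r, t)" by (metis prod.exhaust)
  ultimately show "frechet_derivative (\<lambda>(x, r, t). f x r t) (at p) (0, 1, 0) = (\<lambda>(x, r, t). pdr f x r t) p"
    using frechet_derivative_along_line[of "\<lambda>(x, r, t). f x r t" "(x, 0, t)" r "(0, 1, 0)"]
      smooth_on_imp_differentiable[OF assms(1)] by (simp add: pdr_def)
qed (simp add: Basis_prod_def zero_prod_def)

lemma smooth_on_pdt:
  assumes "smooth_on (\<lambda>(x, r, t). f x r t) U" "open U"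
  shows "smooth_on (\<lambda>(x, r, t). pdt f x r t) U"
proof (rule smooth_on_partial_derivative[OF assms, of "(0, 0, 1)"])
  fix p assume "p \<in> U"
  moreover obtain x r t where "p = (x, r, t)" by (metis prod.exhaust)
  ultimately show "frechet_derivative (\<lambda>(x, r, t). f x r t) (at p) (0, 0, 1) = (\<lambda>(x, r, t). pdt f x r t) p"
    using frechet_derivative_along_line[of "\<lambda>(x, r, t). f x r t" "(x, r, 0)" t "(0, 0, 1)"]
      smooth_on_imp_differentiable[OF assms(1)] by (simp add: pdt_def)
qed (simp add: Basis_prod_def zero_prod_def)

lemma smooth_on_pdx2:
  assumes "smooth_on (\<lambda>(x, t). f x t) U" "open U"
  shows "smooth_on (\<lambda>(x, t). pdx2 f x t) U"
proof (rule smooth_on_partial_derivative[OF assms, of "(1, 0)"])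
  fix p assume "p \<in> U"
  moreover obtain x t where "p = (x, t)" by (metis prod.exhaust)
  ultimately show "frechet_derivative (\<lambda>(x, t). f x t) (at p) (1, 0) = (\<lambda>(x, t). pdx2 f x t) p"
    using frechet_derivative_along_line[of "\<lambda>(x, t). f x t" "(0, t)" x "(1, 0)"]
      smooth_on_imp_differentiable[OF assms(1)] by (simp add: pdx2_def)
qed (simp add: Basis_prod_def zero_prod_def)

lemma box_around_segment:
  fixes U :: "(real \<times> real \<times> real) set"
  assumes "open U" "0 \<le> b" "\<And>r. r \<in> {0..b} \<Longrightarrow> (x0, r, t0) \<in> U"
  obtains \<delta> where "\<delta> > 0" "{x0-\<delta>..x0+\<delta>} \<times> {0..b+\<delta>} \<times> {t0-\<delta>..t0+\<delta>} \<subseteq> U"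
proof -
  define K where "K = (\<lambda>r. (x0, r, t0)) ` {0..b}"
  have "compact K"
    unfolding K_def
    by (intro compact_continuous_image continuous_on_Pair continuous_on_const continuous_on_id compact_Icc)
  moreover have "K \<subseteq> U"
    using assms(3) by (auto simp: K_def)
  ultimately obtain \<epsilon> where \<epsilon>: "\<epsilon> > 0" "(\<Union>p\<in>K. ball p \<epsilon>) \<subseteq> U"
    by (rule compact_subset_open_imp_ball_epsilon_subset[OF _ assms(1)])
  show ?thesis
  proof (rule that[of "\<epsilon> / 4"])
    show "{x0 - \<epsilon>/4..x0 + \<epsilon>/4} \<times> {0..b + \<epsilon>/4} \<times> {t0 - \<epsilon>/4..t0 + \<epsilon>/4} \<subseteq> U"
    proof safe
      fix y r s assume y: "y \<in> {x0 - \<epsilon>/4..x0 + \<epsilon>/4}" and r: "r \<in> {0..b + \<epsilon>/4}"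
        and s: "s \<in> {t0 - \<epsilon>/4..t0 + \<epsilon>/4}"
      have center: "(x0, min r b, t0) \<in> K"
        using r assms(2) by (auto simp: K_def)
      have "dist (x0, min r b, t0) (y, r, s) \<le> \<bar>x0 - y\<bar> + \<bar>min r b - r\<bar> + \<bar>t0 - s\<bar>"
        using norm_Pair_le[of "x0 - y" "(min r b - r, t0 - s)"] norm_Pair_le[of "min r b - r" "t0 - s"]
        by (simp add: dist_norm)
      then have "dist (x0, min r b, t0) (y, r, s) < \<epsilon>"
        using y r s \<epsilon>(1) by (auto simp: abs_le_iff min_def)
      then have "(y, r, s) \<in> ball (x0, min r b, t0) \<epsilon>"
        by (simp add: mem_ball)
      then show "(y, r, s) \<in> U"
        using \<epsilon>(2) center by blast
    qed
  qed (use \<epsilon> in simp)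
qed

section \<open>Integrals on an interval\<close>

lemma continuous_on_section:
  assumes "continuous_on (Y \<times> Z) (\<lambda>(y, r). f y r)" "y \<in> Y" "S \<subseteq> Z"
  shows "continuous_on S (f y)"
proof -
  have "continuous_on S (\<lambda>r. (\<lambda>(y, r). f y r) (y, r))"
    by (rule continuous_on_compose2[OF assms(1)]) (use assms in \<open>auto intro!: continuous_intros\<close>)
  then show ?thesis by simp
qed

lemma has_real_derivative_imp_has_derivative_within:
  "(f has_real_derivative D) (at x) \<Longrightarrow> (f has_derivative (\<lambda>h. h * D)) (at x within S)"
  unfolding has_field_derivative_def
  by (rule has_derivative_at_withinI) (simp add: mult.commute[of _ D])

lemma has_real_derivative_integral_param:
  fixes f fy :: "real \<Rightarrow> real \<Rightarrow> real"
  assumes "\<delta> > 0"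
    and f_cont: "continuous_on ({y0-\<delta>..y0+\<delta>} \<times> {0..b}) (\<lambda>(y, r). f y r)"
    and fy_cont: "continuous_on ({y0-\<delta>..y0+\<delta>} \<times> {0..b}) (\<lambda>(y, r). fy y r)"
    and f_deriv: "\<And>y r. y \<in> {y0-\<delta>..y0+\<delta>} \<Longrightarrow> r \<in> {0..b} \<Longrightarrow>
        ((\<lambda>y. f y r) has_real_derivative fy y r) (at y within {y0-\<delta>..y0+\<delta>})"
  shows "((\<lambda>y. integral {0..b} (f y)) has_real_derivative integral {0..b} (fy y0)) (at y0)"
proof -
  have "((\<lambda>y. integral (cbox 0 b) (f y)) has_real_derivative integral (cbox 0 b) (fy y0))
      (at y0 within {y0-\<delta>..y0+\<delta>})"
  proof (rule leibniz_rule_field_derivative)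
    show "f y integrable_on cbox 0 b" if "y \<in> {y0-\<delta>..y0+\<delta>}" for y
      using continuous_on_section[OF f_cont that order_refl] by (auto intro: integrable_continuous_real)
  qed (use assms in auto)
  then show ?thesis
    using assms(1) by (simp add: at_within_Icc_at)
qed

lemma has_derivative_integral_param_upper:
  fixes f fy :: "real \<Rightarrow> real \<Rightarrow> real"
  assumes "\<delta> > 0" "0 < b0" "b0 < B"
    and f_cont: "continuous_on ({y0-\<delta>..y0+\<delta>} \<times> {0..B}) (\<lambda>(y, r). f y r)"
    and fy_cont: "continuous_on ({y0-\<delta>..y0+\<delta>} \<times> {0..B}) (\<lambda>(y, r). fy y r)"
    and f_deriv: "\<And>y r. y \<in> {y0-\<delta>..y0+\<delta>} \<Longrightarrow> r \<in> {0..B} \<Longrightarrow>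
        ((\<lambda>y. f y r) has_real_derivative fy y r) (at y within {y0-\<delta>..y0+\<delta>})"
  shows "((\<lambda>(y, b). integral {0..b} (f y)) has_derivative
           (\<lambda>(hy, hb). hy * integral {0..b0} (fy y0) + hb * f y0 b0)) (at (y0, b0))"
proof -
  define X where "X = {y0-\<delta><..<y0+\<delta>}"
  have box: "{y0-\<delta>..y0+\<delta>} \<times> {0..b0} \<subseteq> {y0-\<delta>..y0+\<delta>} \<times> {0..B}"
    using assms(3) by auto
  have "((\<lambda>y. integral {0..b0} (f y)) has_real_derivative integral {0..b0} (fy y0)) (at y0)"
    using assms(3) by (intro has_real_derivative_integral_param[OF assms(1)] f_deriv
        continuous_on_subset[OF f_cont box] continuous_on_subset[OF fy_cont box]) auto
  then have "((\<lambda>y. integral {0..b0} (f y)) has_derivative (\<lambda>h. h * integral {0..b0} (fy y0))) (at y0 within X)"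
    by (rule has_real_derivative_imp_has_derivative_within)
  moreover have "((\<lambda>b. integral {0..b} (f y)) has_derivative blinfun_apply (blinfun_scaleR_left (f y b)))
      (at b within {0<..<B})" if "y \<in> X" "b \<in> {0<..<B}" for y b
  proof -
    have "continuous_on {0..B} (f y)"
      using continuous_on_section[OF f_cont] that(1) by (simp add: X_def)
    then have "((\<lambda>b. integral {0..b} (f y)) has_real_derivative f y b) (at b)"
      using integral_has_real_derivative[of 0 B "f y" b] that(2) by (simp add: at_within_Icc_at)
    moreover have "blinfun_apply (blinfun_scaleR_left (f y b)) = (\<lambda>h. h * f y b)"
      by (rule ext) simp
    ultimately show ?thesis
      by (simp only: has_real_derivative_imp_has_derivative_within)
  qed
  moreover have "continuous (at (y0, b0) within X \<times> {0<..<B}) (\<lambda>(y, r). blinfun_scaleR_left (f y r))"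
  proof -
    have "continuous (at (y0, b0) within X \<times> {0<..<B}) (\<lambda>(y, r). f y r)"
    proof (rule continuous_within_subset)
      show "continuous (at (y0, b0) within {y0-\<delta>..y0+\<delta>} \<times> {0..B}) (\<lambda>(y, r). f y r)"
        using f_cont assms(1,2,3) unfolding continuous_on_eq_continuous_within by simp
    qed (auto simp: X_def)
    then show ?thesis
      unfolding split_beta' by (intro continuous_intros) (simp add: split_beta')
  qed
  ultimately have "((\<lambda>(y, b). integral {0..b} (f y)) has_derivative
      (\<lambda>(hy, hb). hy * integral {0..b0} (fy y0) + blinfun_apply (blinfun_scaleR_left (f y0 b0)) hb))
      (at (y0, b0) within X \<times> {0<..<B})"
    by (rule has_derivative_partialsI) (use assms in \<open>auto simp: X_def\<close>)
  moreover have "at (y0, b0) within X \<times> {0<..<B} = at (y0, b0)"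
    using assms by (intro at_within_open) (auto simp: X_def intro!: open_Times)
  ultimately show ?thesis
    by (simp add: mult.commute)
qed

lemma has_real_derivative_integral_moving_upper:
  fixes f fy :: "real \<Rightarrow> real \<Rightarrow> real"
  assumes "\<delta> > 0" "\<rho> y0 > 0" and \<rho>_deriv: "(\<rho> has_real_derivative \<rho>') (at y0)"
    and "continuous_on ({y0-\<delta>..y0+\<delta>} \<times> {0..\<rho> y0 + \<delta>}) (\<lambda>(y, r). f y r)"
    and "continuous_on ({y0-\<delta>..y0+\<delta>} \<times> {0..\<rho> y0 + \<delta>}) (\<lambda>(y, r). fy y r)"
    and "\<And>y r. y \<in> {y0-\<delta>..y0+\<delta>} \<Longrightarrow> r \<in> {0..\<rho> y0 + \<delta>} \<Longrightarrow>
        ((\<lambda>y. f y r) has_real_derivative fy y r) (at y within {y0-\<delta>..y0+\<delta>})"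
  shows "((\<lambda>y. integral {0..\<rho> y} (f y)) has_real_derivative
           integral {0..\<rho> y0} (fy y0) + \<rho>' * f y0 (\<rho> y0)) (at y0)"
proof -
  have "((\<lambda>y. (y, \<rho> y)) has_derivative (\<lambda>h. (h, \<rho>' * h))) (at y0)"
    using \<rho>_deriv by (auto intro!: derivative_eq_intros simp: has_field_derivative_def)
  from has_derivative_compose[OF this has_derivative_integral_param_upper[OF assms(1,2) _ assms(4-6)]]
  have "((\<lambda>y. integral {0..\<rho> y} (f y)) has_derivative
      (\<lambda>h. h * integral {0..\<rho> y0} (fy y0) + \<rho>' * h * f y0 (\<rho> y0))) (at y0)"
    using assms(1) by (simp add: o_def)
  moreover have "(\<lambda>h. h * integral {0..\<rho> y0} (fy y0) + \<rho>' * h * f y0 (\<rho> y0))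
      = (*) (integral {0..\<rho> y0} (fy y0) + \<rho>' * f y0 (\<rho> y0))"
    by (rule ext) (simp add: algebra_simps)
  ultimately show ?thesis
    by (simp add: has_field_derivative_def)
qed

lemma integral_rescale_unit_interval:
  fixes g :: "real \<Rightarrow> real"
  assumes "z \<ge> 0"
  shows "integral {0..z} (\<lambda>s. g s * s) = z^2 * integral {0..1} (\<lambda>u. g (z * u) * u)"
proof (cases "z = 0")
  case False
  then have z: "z > 0" using assms by simp
  have "(\<lambda>x. x / z) ` {0..z} = {0..1}"
    using z by (auto simp: image_iff intro!: bexI[where x = "z * _"] mult_left_le)
  moreover have "integral ((\<lambda>x. x / z) ` {0..z}) (\<lambda>x. g (z * x) * (z * x))
      = (1 / \<bar>z\<bar>) *\<^sub>R integral {0..z} (\<lambda>s. g s * s)"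
    using z integral_stretch_real[where f="\<lambda>s. g s * s" and m=z and a=0 and b=z] by simp
  moreover have "(\<lambda>x. g (z * x) * (z * x)) = (\<lambda>x. z * (g (z * x) * x))"
    by (rule ext) (simp add: ac_simps)
  ultimately have "z * integral {0..1} (\<lambda>u. g (z * u) * u) = (1 / z) * integral {0..z} (\<lambda>s. g s * s)"
    using z by simp
  then show ?thesis
    using z by (simp add: field_simps power2_eq_square)
qed simp

lemma mult_unit_interval_mem: "z \<in> {0..b} \<Longrightarrow> u \<in> {0..1} \<Longrightarrow> z * u \<in> {0..(b::real)}"
  by (auto intro: order_trans[OF mult_left_le])

lemma continuous_on_integral_rescaled:
  fixes g :: "real \<Rightarrow> real \<Rightarrow> real"
  assumes "continuous_on (Y \<times> {0..b}) (\<lambda>(y, z). g y z)"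
  shows "continuous_on (Y \<times> {0..b}) (\<lambda>(y, z). integral {0..1} (\<lambda>u. g y (z * u) * u))"
proof -
  have "continuous_on ((Y \<times> {0..b}) \<times> cbox 0 1)
      (\<lambda>q. (\<lambda>(y, z). g y z) (fst (fst q), snd (fst q) * snd q) * snd q)"
    by (intro continuous_on_mult continuous_intros continuous_on_compose2[OF assms])
       (auto intro: mult_unit_interval_mem)
  then have "continuous_on (Y \<times> {0..b})
      (\<lambda>p. integral (cbox 0 1) (\<lambda>u. (\<lambda>(y, z). g y z) (fst p, snd p * u) * u))"
    by (intro integral_continuous_on_param) (simp add: split_beta')
  then show ?thesis by (simp add: split_beta')
qed

lemma has_real_derivative_integral_rescaled:
  fixes g gy :: "real \<Rightarrow> real \<Rightarrow> real"
  assumes g_cont: "continuous_on (Y \<times> {0..b}) (\<lambda>(y, z). g y z)"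
    and gy_cont: "continuous_on (Y \<times> {0..b}) (\<lambda>(y, z). gy y z)"
    and g_deriv: "\<And>y z. y \<in> Y \<Longrightarrow> z \<in> {0..b} \<Longrightarrow> ((\<lambda>y. g y z) has_real_derivative gy y z) (at y within Y)"
    and "convex Y" "y \<in> Y" "z \<in> {0..b}"
  shows "((\<lambda>y. integral {0..1} (\<lambda>u. g y (z * u) * u)) has_real_derivative
           integral {0..1} (\<lambda>u. gy y (z * u) * u)) (at y within Y)"
proof -
  have "((\<lambda>y. integral (cbox 0 1) (\<lambda>u. g y (z * u) * u)) has_real_derivative
      integral (cbox 0 1) (\<lambda>u. gy y (z * u) * u)) (at y within Y)"
  proof (rule leibniz_rule_field_derivative)
    show "((\<lambda>y. g y (z * u) * u) has_field_derivative gy y (z * u) * u) (at y within Y)"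
      if "y \<in> Y" "u \<in> cbox 0 1" for y u
      using g_deriv[OF that(1) mult_unit_interval_mem[OF assms(6), of u]] that
      by (auto intro: DERIV_cmult_right)
    show "(\<lambda>u. g y (z * u) * u) integrable_on cbox 0 1" if "y \<in> Y" for y
    proof -
      have "continuous_on {0..1} (\<lambda>u. (\<lambda>(y, z). g y z) (y, z * u) * u)"
        by (intro continuous_on_mult continuous_on_id continuous_on_compose2[OF g_cont])
           (use that assms(6) in \<open>auto intro!: continuous_intros intro: mult_unit_interval_mem\<close>)
      then show ?thesis by (auto intro: integrable_continuous_real)
    qed
    have "continuous_on (Y \<times> cbox 0 1) (\<lambda>p. (\<lambda>(y, z). gy y z) (fst p, z * snd p) * snd p)"
      by (intro continuous_on_mult continuous_intros continuous_on_compose2[OF gy_cont])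
         (use assms(6) in \<open>auto intro: mult_unit_interval_mem\<close>)
    then show "continuous_on (Y \<times> cbox 0 1) (\<lambda>(y, u). gy y (z * u) * u)"
      by (simp add: split_beta')
  qed (use assms in auto)
  then show ?thesis by simp
qed

lemma integral_linear_combination2:
  fixes f g h :: "real \<Rightarrow> real"
  assumes "f integrable_on S" "g integrable_on S" "\<And>x. x \<in> S \<Longrightarrow> h x = a * f x + b * g x"
  shows "integral S h = a * integral S f + b * integral S g"
proof -
  have "((\<lambda>x. a * f x + b * g x) has_integral a * integral S f + b * integral S g) S"
    using assms(1,2) by (intro has_integral_add has_integral_mult_right integrable_integral)
  then have "(h has_integral a * integral S f + b * integral S g) S"
    using assms(3) by (subst has_integral_cong) auto
  then show ?thesis by (rule integral_unique)
qed

lemma integral_linear_combination3: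
  fixes f g k h :: "real \<Rightarrow> real"
  assumes "f integrable_on S" "g integrable_on S" "k integrable_on S"
    and "\<And>x. x \<in> S \<Longrightarrow> h x = a * f x + b * g x + c * k x"
  shows "integral S h = a * integral S f + b * integral S g + c * integral S k"
proof -
  have "((\<lambda>x. a * f x + b * g x + c * k x) has_integral
      a * integral S f + b * integral S g + c * integral S k) S"
    using assms(1-3) by (intro has_integral_add has_integral_mult_right integrable_integral)
  then have "(h has_integral a * integral S f + b * integral S g + c * integral S k) S"
    using assms(4) by (subst has_integral_cong) auto
  then show ?thesis by (rule integral_unique)
qed

lemma has_integral_radial_laplacian:
  fixes f f' :: "real \<Rightarrow> real"
  assumes "0 \<le> b" "continuous_on {0..b} f"
    and "\<And>r. r \<in> {0<..<b} \<Longrightarrow> (f has_real_derivative f' r) (at r)"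
  shows "((\<lambda>r. r * (f' r + (1 / r) * f r)) has_integral b * f b) {0..b}"
proof -
  have "((\<lambda>r. r * (f' r + (1 / r) * f r)) has_integral b * f b - 0 * f 0) {0..b}"
  proof (rule fundamental_theorem_of_calculus_interior)
    show "continuous_on {0..b} (\<lambda>r. r * f r)"
      using assms(2) by (intro continuous_intros)
    fix r assume r: "r \<in> {0<..<b}"
    have "((\<lambda>r. r * f r) has_real_derivative 1 * f r + f' r * r) (at r)"
      by (intro DERIV_mult DERIV_ident assms(3) r)
    moreover have "1 * f r + f' r * r = r * (f' r + (1 / r) * f r)"
      using r by (simp add: field_simps)
    ultimately show "((\<lambda>r. r * f r) has_vector_derivative r * (f' r + (1 / r) * f r)) (at r)"
      by (simp add: has_real_derivative_iff_has_vector_derivative)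
  qed (use assms(1) in simp)
  then show ?thesis by simp
qed

lemma has_integral_flux_by_parts:
  fixes w u g g' :: "real \<Rightarrow> real"
  assumes "0 \<le> b" "continuous_on {0..b} w" "continuous_on {0..b} g"
    and "\<And>r. r \<in> {0<..<b} \<Longrightarrow> ((\<lambda>s. s * w s) has_real_derivative - (r * u r)) (at r)"
    and "\<And>r. r \<in> {0<..<b} \<Longrightarrow> (g has_real_derivative g' r) (at r)"
  shows "((\<lambda>r. r * w r * g' r - r * u r * g r) has_integral b * w b * g b) {0..b}"
proof -
  have "((\<lambda>r. r * w r * g' r - r * u r * g r) has_integral b * w b * g b - 0 * w 0 * g 0) {0..b}"
  proof (rule fundamental_theorem_of_calculus_interior)
    show "continuous_on {0..b} (\<lambda>r. r * w r * g r)"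
      using assms(2,3) by (intro continuous_intros)
    fix r assume r: "r \<in> {0<..<b}"
    have "((\<lambda>r. r * w r * g r) has_real_derivative - (r * u r) * g r + g' r * (r * w r)) (at r)"
      by (intro DERIV_mult assms(4,5) r)
    then show "((\<lambda>r. r * w r * g r) has_vector_derivative r * w r * g' r - r * u r * g r) (at r)"
      by (simp add: has_real_derivative_iff_has_vector_derivative algebra_simps)
  qed (use assms(1) in simp)
  then show ?thesis by simp
qed

section \<open>Radial profiles and the function eta\<close>

text \<open>The parameter y stands for x at fixed t, or for t at fixed x; v y r is the axial velocity.\<close>

locale radial_family =
  fixes v vy :: "real \<Rightarrow> real \<Rightarrow> real" and \<rho> :: "real \<Rightarrow> real" and \<rho>' y0 \<delta> D :: real
  assumes \<delta>_pos: "\<delta> > 0" and D_pos: "D > 0" and \<rho>_pos: "\<And>y. \<rho> y > 0"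
    and \<rho>_deriv: "(\<rho> has_real_derivative \<rho>') (at y0)"
    and v_cont: "continuous_on ({y0-\<delta>..y0+\<delta>} \<times> {0..\<rho> y0 + \<delta>}) (\<lambda>(y, r). v y r)"
    and vy_cont: "continuous_on ({y0-\<delta>..y0+\<delta>} \<times> {0..\<rho> y0 + \<delta>}) (\<lambda>(y, r). vy y r)"
    and v_deriv: "\<And>y r. y \<in> {y0-\<delta>..y0+\<delta>} \<Longrightarrow> r \<in> {0..\<rho> y0 + \<delta>} \<Longrightarrow>
       ((\<lambda>y. v y r) has_real_derivative vy y r) (at y within {y0-\<delta>..y0+\<delta>})"
begin

abbreviation params :: "real set" where "params \<equiv> {y0-\<delta>..y0+\<delta>}"
abbreviation radii :: "real set" where "radii \<equiv> {0..\<rho> y0 + \<delta>}"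

definition v_avg :: "real \<Rightarrow> real" where
  "v_avg y = 2 / (\<rho> y)^2 * integral {0..\<rho> y} (\<lambda>r. v y r * r)"

definition \<eta> :: "real \<Rightarrow> real \<Rightarrow> real" where
  "\<eta> y r = (1 / D) * integral {0..r} (\<lambda>z. (1 / z) * integral {0..z} (\<lambda>s. (v y s - v_avg y) * s))"

definition moment :: "real \<Rightarrow> real \<Rightarrow> real" where
  "moment y z = integral {0..1} (\<lambda>u. v y (z * u) * u)"

definition moment' :: "real \<Rightarrow> real \<Rightarrow> real" where
  "moment' y z = integral {0..1} (\<lambda>u. vy y (z * u) * u)"

definition double_moment :: "real \<Rightarrow> real \<Rightarrow> real" where
  "double_moment y r = r^2 * integral {0..1} (\<lambda>w. moment y (r * w) * w)"

definition double_moment' :: "real \<Rightarrow> real \<Rightarrow> real" where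
  "double_moment' y r = r^2 * integral {0..1} (\<lambda>w. moment' y (r * w) * w)"

lemma y0_in_params: "y0 \<in> params"
  using \<delta>_pos by simp

lemma moment_cont: "continuous_on (params \<times> radii) (\<lambda>(y, z). moment y z)"
  unfolding moment_def by (rule continuous_on_integral_rescaled[OF v_cont])

lemma moment'_cont: "continuous_on (params \<times> radii) (\<lambda>(y, z). moment' y z)"
  unfolding moment'_def by (rule continuous_on_integral_rescaled[OF vy_cont])

lemma moment_deriv:
  "y \<in> params \<Longrightarrow> z \<in> radii \<Longrightarrow> ((\<lambda>y. moment y z) has_real_derivative moment' y z) (at y within params)"
  unfolding moment_def moment'_def
  by (rule has_real_derivative_integral_rescaled[OF v_cont vy_cont v_deriv]) auto

lemma double_moment_cont: "continuous_on (params \<times> radii) (\<lambda>(y, r). double_moment y r)"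
  using continuous_on_integral_rescaled[OF moment_cont]
  unfolding double_moment_def split_beta' by (intro continuous_intros) (simp add: split_beta')

lemma double_moment'_cont: "continuous_on (params \<times> radii) (\<lambda>(y, r). double_moment' y r)"
  using continuous_on_integral_rescaled[OF moment'_cont]
  unfolding double_moment'_def split_beta' by (intro continuous_intros) (simp add: split_beta')

lemma double_moment_deriv:
  "y \<in> params \<Longrightarrow> r \<in> radii \<Longrightarrow>
   ((\<lambda>y. double_moment y r) has_real_derivative double_moment' y r) (at y within params)"
  unfolding double_moment_def double_moment'_def
  by (intro DERIV_cmult has_real_derivative_integral_rescaled[OF moment_cont moment'_cont moment_deriv])
     auto

lemma inner_integral_eq:
  assumes "y \<in> params" "z \<in> radii"
  shows "(1 / z) * integral {0..z} (\<lambda>s. (v y s - v_avg y) * s) = z * moment y z - v_avg y * z / 2"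
proof (cases "z = 0")
  case False
  then have z: "z > 0" using assms(2) by auto
  have cont: "continuous_on {0..z} (v y)"
    using continuous_on_section[OF v_cont assms(1)] assms(2) by auto
  have "integral {0..z} (\<lambda>s. (v y s - v_avg y) * s)
      = integral {0..z} (\<lambda>s. v y s * s) - integral {0..z} (\<lambda>s. v_avg y * s)"
    unfolding left_diff_distrib
    by (intro integral_diff integrable_continuous_real continuous_intros cont)
  also have "\<dots> = z^2 * moment y z - v_avg y * (z^2 / 2)"
    using z integral_rescale_unit_interval[of z "v y"] by (simp add: moment_def)
  finally show ?thesis
    using z by (simp add: field_simps power2_eq_square)
qed simp

text \<open>Rescaling removes the apparent singularity of the weight 1/z at the axis.\<close>

lemma \<eta>_eq:
  assumes "y \<in> params" "r \<in> radii"
  shows "\<eta> y r = (double_moment y r - v_avg y * r^2 / 4) / D"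
proof -
  have "continuous_on {0..r} (moment y)"
    using continuous_on_section[OF moment_cont assms(1)] assms(2) by auto
  then have integrable: "(\<lambda>z. moment y z * z) integrable_on {0..r}"
    by (intro integrable_continuous_real continuous_on_mult continuous_on_id)
  have "integral {0..r} (\<lambda>z. (1 / z) * integral {0..z} (\<lambda>s. (v y s - v_avg y) * s))
      = integral {0..r} (\<lambda>z. moment y z * z - v_avg y / 2 * z)"
    by (rule integral_cong) (use inner_integral_eq[OF assms(1)] assms(2) in \<open>auto simp: algebra_simps\<close>)
  also have "\<dots> = integral {0..r} (\<lambda>z. moment y z * z) - integral {0..r} (\<lambda>z. v_avg y / 2 * z)"
    by (intro integral_diff integrable integrable_continuous_real continuous_intros)
  also have "\<dots> = double_moment y r - v_avg y * r^2 / 4"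
    using assms(2) integral_rescale_unit_interval[of r "moment y"] by (simp add: double_moment_def)
  finally show ?thesis
    using D_pos by (simp add: \<eta>_def field_simps)
qed

lemma eventually_near_y0: "eventually (\<lambda>y. y \<in> params \<and> {0..\<rho> y} \<subseteq> radii) (nhds y0)"
proof -
  have "eventually (\<lambda>y. y \<in> {y0-\<delta><..<y0+\<delta>}) (nhds y0)"
    using \<delta>_pos by (intro eventually_nhds_in_open) auto
  moreover have "eventually (\<lambda>y. \<rho> y < \<rho> y0 + \<delta>) (at y0)"
    using order_tendstoD(2)[of \<rho> "\<rho> y0" "at y0" "\<rho> y0 + \<delta>"] DERIV_isCont[OF \<rho>_deriv] \<delta>_pos
    by (simp add: isCont_def)
  then have "eventually (\<lambda>y. \<rho> y < \<rho> y0 + \<delta>) (nhds y0)"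
    using \<delta>_pos by (auto simp: eventually_at_filter elim: eventually_mono)
  ultimately show ?thesis
    by eventually_elim auto
qed

lemma has_real_derivative_integral_moving:
  assumes "continuous_on (params \<times> radii) (\<lambda>(y, r). f y r)"
    and "continuous_on (params \<times> radii) (\<lambda>(y, r). fy y r)"
    and "\<And>y r. y \<in> params \<Longrightarrow> r \<in> radii \<Longrightarrow>
        ((\<lambda>y. f y r) has_real_derivative fy y r) (at y within params)"
  shows "((\<lambda>y. integral {0..\<rho> y} (f y)) has_real_derivative
           integral {0..\<rho> y0} (fy y0) + \<rho>' * f y0 (\<rho> y0)) (at y0)"
  by (rule has_real_derivative_integral_moving_upper[OF \<delta>_pos \<rho>_pos \<rho>_deriv assms])

lemma has_real_derivative_radial_average:
  assumes "(P has_real_derivative P') (at y0)"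
  shows "((\<lambda>y. 2 / (\<rho> y)^2 * P y) has_real_derivative deriv (\<lambda>y. 2 / (\<rho> y)^2 * P y) y0) (at y0)"
proof -
  have "P differentiable (at y0)" "\<rho> differentiable (at y0)"
    using assms \<rho>_deriv real_differentiable_def by blast+
  then have "(\<lambda>y. 2 / (\<rho> y)^2 * P y) differentiable (at y0)"
    using \<rho>_pos[of y0]
    by (intro differentiable_mult differentiable_divide differentiable_power differentiable_const) auto
  then show ?thesis
    using DERIV_deriv_iff_real_differentiable by blast
qed

definition v_avg' :: real where "v_avg' = deriv v_avg y0"

lemma v_avg_deriv: "(v_avg has_real_derivative v_avg') (at y0)"
  unfolding v_avg'_def v_avg_def[abs_def]
proof (rule has_real_derivative_radial_average, rule has_real_derivative_integral_moving)
  show "continuous_on (params \<times> radii) (\<lambda>(y, r). v y r * r)"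
    using v_cont unfolding split_beta' by (intro continuous_intros)
  show "continuous_on (params \<times> radii) (\<lambda>(y, r). vy y r * r)"
    using vy_cont unfolding split_beta' by (intro continuous_intros)
  show "((\<lambda>y. v y r * r) has_real_derivative vy y r * r) (at y within params)"
    if "y \<in> params" "r \<in> radii" for y r
    using v_deriv[OF that] by (rule DERIV_cmult_right)
qed

definition \<eta>' :: "real \<Rightarrow> real" where
  "\<eta>' r = (double_moment' y0 r - v_avg' * r^2 / 4) / D"

lemma \<eta>_deriv:
  assumes "r \<in> radii"
  shows "((\<lambda>y. \<eta> y r) has_real_derivative \<eta>' r) (at y0)"
proof -
  have "((\<lambda>y. double_moment y r) has_real_derivative double_moment' y0 r) (at y0)"
    using double_moment_deriv[OF y0_in_params assms] \<delta>_pos by (simp add: at_within_Icc_at)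
  then have "((\<lambda>y. (double_moment y r - v_avg y * r^2 / 4) / D) has_real_derivative \<eta>' r) (at y0)"
    unfolding \<eta>'_def by (intro DERIV_cdivide DERIV_diff DERIV_cmult_right v_avg_deriv)
  moreover have "eventually (\<lambda>y. (double_moment y r - v_avg y * r^2 / 4) / D = \<eta> y r) (nhds y0)"
    using eventually_near_y0 by (rule eventually_mono) (use \<eta>_eq assms in auto)
  ultimately show ?thesis
    by (subst (asm) DERIV_cong_ev[OF refl _ refl])
qed

lemma \<eta>_cont: "y \<in> params \<Longrightarrow> continuous_on radii (\<eta> y)"
proof -
  assume y: "y \<in> params"
  have A: "continuous_on radii (double_moment y)"
    using continuous_on_section[OF double_moment_cont y] by simp
  have "continuous_on radii (\<lambda>r. (double_moment y r - v_avg y * r^2 / 4) / D)"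
    using A D_pos by (intro continuous_intros) auto
  then show ?thesis
    by (rule continuous_on_eq) (use \<eta>_eq y in auto)
qed

lemma \<eta>'_cont: "continuous_on radii \<eta>'"
proof -
  have A': "continuous_on radii (double_moment' y0)"
    using continuous_on_section[OF double_moment'_cont y0_in_params] by simp
  show ?thesis
    unfolding \<eta>'_def[abs_def] using A' D_pos by (intro continuous_intros) auto
qed

lemma \<eta>_rderiv:
  assumes "r \<in> {0<..<\<rho> y0 + \<delta>}"
  shows "(\<eta> y0 has_real_derivative (r * moment y0 r - v_avg y0 * r / 2) / D) (at r)"
proof -
  define G where "G z = z * moment y0 z - v_avg y0 * z / 2" for z
  have M: "continuous_on radii (moment y0)"
    using continuous_on_section[OF moment_cont y0_in_params] by simp
  have "continuous_on radii G"
    unfolding G_def[abs_def] using M by (intro continuous_intros) auto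
  then have "((\<lambda>s. integral {0..s} G) has_real_derivative G r) (at r)"
    using integral_has_real_derivative[of 0 "\<rho> y0 + \<delta>" G r] assms by (simp add: at_within_Icc_at)
  then have "((\<lambda>s. integral {0..s} G / D) has_real_derivative G r / D) (at r)"
    by (rule DERIV_cdivide)
  moreover have "eventually (\<lambda>s. integral {0..s} G / D = \<eta> y0 s) (nhds r)"
  proof (rule eventually_mono[OF eventually_nhds_in_open[OF _ assms]])
    fix s assume s: "s \<in> {0<..<\<rho> y0 + \<delta>}"
    have "G z = (1 / z) * integral {0..z} (\<lambda>s. (v y0 s - v_avg y0) * s)" if "z \<in> {0..s}" for z
      using inner_integral_eq[OF y0_in_params, of z] that s by (simp add: G_def)
    then have "integral {0..s} G = integral {0..s} (\<lambda>z. (1 / z) * integral {0..z} (\<lambda>s. (v y0 s - v_avg y0) * s))"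
      by (rule integral_cong)
    then show "integral {0..s} G / D = \<eta> y0 s"
      by (simp add: \<eta>_def)
  qed simp
  ultimately show ?thesis
    unfolding G_def by (subst (asm) DERIV_cong_ev[OF refl _ refl])
qed

lemma integral_mult_\<eta>_eq:
  assumes g_cont: "continuous_on (params \<times> radii) (\<lambda>(y, r). g y r)"
    and "y \<in> params" "{0..b} \<subseteq> radii"
  shows "integral {0..b} (\<lambda>r. g y r * \<eta> y r)
           = 1 / D * integral {0..b} (\<lambda>r. g y r * double_moment y r)
             + (- v_avg y / (4 * D)) * integral {0..b} (\<lambda>r. g y r * r^2)"
proof (rule integral_linear_combination2)
  have g: "continuous_on {0..b} (g y)" and A: "continuous_on {0..b} (double_moment y)"
    using continuous_on_section[OF g_cont assms(2,3)] continuous_on_section[OF double_moment_cont assms(2,3)] .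
  show "(\<lambda>r. g y r * double_moment y r) integrable_on {0..b}"
    using g A by (intro integrable_continuous_real continuous_intros)
  show "(\<lambda>r. g y r * r^2) integrable_on {0..b}"
    using g by (intro integrable_continuous_real continuous_intros)
  show "g y r * \<eta> y r = 1 / D * (g y r * double_moment y r) + - v_avg y / (4 * D) * (g y r * r^2)"
    if "r \<in> {0..b}" for r
  proof -
    have eq: "\<eta> y r = (double_moment y r - v_avg y * r^2 / 4) / D"
      using \<eta>_eq[OF assms(2), of r] that assms(3) by auto
    show ?thesis
      unfolding eq using D_pos by (simp add: field_simps)
  qed
qed

lemma integral_mult_\<eta>'_eq:
  assumes g_cont: "continuous_on (params \<times> radii) (\<lambda>(y, r). g y r)"
    and gy_cont: "continuous_on (params \<times> radii) (\<lambda>(y, r). gy y r)"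
    and "{0..b} \<subseteq> radii"
  shows "integral {0..b} (\<lambda>r. gy y0 r * \<eta> y0 r + g y0 r * \<eta>' r)
      = 1 / D * integral {0..b} (\<lambda>r. gy y0 r * double_moment y0 r + g y0 r * double_moment' y0 r)
        + (- v_avg y0 / (4 * D)) * integral {0..b} (\<lambda>r. gy y0 r * r^2)
        + (- v_avg' / (4 * D)) * integral {0..b} (\<lambda>r. g y0 r * r^2)"
proof (rule integral_linear_combination3)
  note restrict = continuous_on_section[OF _ y0_in_params assms(3)]
  have g: "continuous_on {0..b} (g y0)" and gy: "continuous_on {0..b} (gy y0)"
    and A: "continuous_on {0..b} (double_moment y0)" and A': "continuous_on {0..b} (double_moment' y0)"
    using restrict[OF g_cont] restrict[OF gy_cont] restrict[OF double_moment_cont]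
      restrict[OF double_moment'_cont] by auto
  show "(\<lambda>r. gy y0 r * double_moment y0 r + g y0 r * double_moment' y0 r) integrable_on {0..b}"
    using g gy A A' by (intro integrable_continuous_real continuous_intros)
  show "(\<lambda>r. gy y0 r * r^2) integrable_on {0..b}"
    using gy by (intro integrable_continuous_real continuous_intros)
  show "(\<lambda>r. g y0 r * r^2) integrable_on {0..b}"
    using g by (intro integrable_continuous_real continuous_intros)
  show "gy y0 r * \<eta> y0 r + g y0 r * \<eta>' r
      = 1 / D * (gy y0 r * double_moment y0 r + g y0 r * double_moment' y0 r)
        + - v_avg y0 / (4 * D) * (gy y0 r * r^2) + - v_avg' / (4 * D) * (g y0 r * r^2)"
    if "r \<in> {0..b}" for r
  proof -
    have eq: "\<eta> y0 r = (double_moment y0 r - v_avg y0 * r^2 / 4) / D"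
      using \<eta>_eq[OF y0_in_params, of r] that assms(3) by auto
    show ?thesis
      unfolding eq \<eta>'_def using D_pos by (simp add: field_simps)
  qed
qed

lemma has_real_derivative_integral_moving_mult:
  assumes "continuous_on (params \<times> radii) (\<lambda>(y, r). g y r)"
    and "continuous_on (params \<times> radii) (\<lambda>(y, r). gy y r)"
    and "\<And>y r. y \<in> params \<Longrightarrow> r \<in> radii \<Longrightarrow>
        ((\<lambda>y. g y r) has_real_derivative gy y r) (at y within params)"
    and "continuous_on (params \<times> radii) (\<lambda>(y, r). h y r)"
    and "continuous_on (params \<times> radii) (\<lambda>(y, r). hy y r)"
    and "\<And>y r. y \<in> params \<Longrightarrow> r \<in> radii \<Longrightarrow>
        ((\<lambda>y. h y r) has_real_derivative hy y r) (at y within params)"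
  shows "((\<lambda>y. integral {0..\<rho> y} (\<lambda>r. g y r * h y r)) has_real_derivative
           integral {0..\<rho> y0} (\<lambda>r. gy y0 r * h y0 r + g y0 r * hy y0 r)
           + \<rho>' * (g y0 (\<rho> y0) * h y0 (\<rho> y0))) (at y0)"
proof (rule has_real_derivative_integral_moving)
  show "continuous_on (params \<times> radii) (\<lambda>(y, r). g y r * h y r)"
    using assms(1,4) unfolding split_beta' by (intro continuous_intros)
  show "continuous_on (params \<times> radii) (\<lambda>(y, r). gy y r * h y r + g y r * hy y r)"
    using assms(1,2,4,5) unfolding split_beta' by (intro continuous_intros)
  show "((\<lambda>y. g y r * h y r) has_real_derivative gy y r * h y r + g y r * hy y r) (at y within params)"
    if "y \<in> params" "r \<in> radii" for y r
    using DERIV_mult[OF assms(3)[OF that] assms(6)[OF that]] by (simp add: ac_simps)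
qed

lemma has_real_derivative_integral_mult_\<eta>:
  assumes g_cont: "continuous_on (params \<times> radii) (\<lambda>(y, r). g y r)"
    and gy_cont: "continuous_on (params \<times> radii) (\<lambda>(y, r). gy y r)"
    and g_deriv: "\<And>y r. y \<in> params \<Longrightarrow> r \<in> radii \<Longrightarrow>
        ((\<lambda>y. g y r) has_real_derivative gy y r) (at y within params)"
  shows "((\<lambda>y. integral {0..\<rho> y} (\<lambda>r. g y r * \<eta> y r)) has_real_derivative
           integral {0..\<rho> y0} (\<lambda>r. gy y0 r * \<eta> y0 r + g y0 r * \<eta>' r)
           + \<rho>' * (g y0 (\<rho> y0) * \<eta> y0 (\<rho> y0))) (at y0)"
proof -
  let ?r0 = "\<rho> y0" and ?A = double_moment and ?A' = double_moment'
  define Q where "Q y = integral {0..\<rho> y} (\<lambda>r. g y r * ?A y r)" for y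
  define T where "T y = integral {0..\<rho> y} (\<lambda>r. g y r * r^2)" for y
  define Q' where "Q' = integral {0..?r0} (\<lambda>r. gy y0 r * ?A y0 r + g y0 r * ?A' y0 r)"
  define T' where "T' = integral {0..?r0} (\<lambda>r. gy y0 r * r^2)"
  have "(Q has_real_derivative Q' + \<rho>' * (g y0 ?r0 * ?A y0 ?r0)) (at y0)"
    unfolding Q_def Q'_def
    using has_real_derivative_integral_moving_mult[OF g_cont gy_cont g_deriv
        double_moment_cont double_moment'_cont double_moment_deriv] .
  moreover have "(T has_real_derivative T' + \<rho>' * (g y0 ?r0 * ?r0^2)) (at y0)"
    using has_real_derivative_integral_moving_mult[OF g_cont gy_cont g_deriv,
        of "\<lambda>y r. r^2" "\<lambda>y r. 0"]
    unfolding T_def T'_def by (simp add: split_beta' continuous_intros)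
  ultimately have deriv: "((\<lambda>y. 1 / D * Q y + (- v_avg y / (4 * D)) * T y) has_real_derivative
      1 / D * (Q' + \<rho>' * (g y0 ?r0 * ?A y0 ?r0))
      + ((- v_avg' / (4 * D)) * T y0 + (T' + \<rho>' * (g y0 ?r0 * ?r0^2)) * (- v_avg y0 / (4 * D)))) (at y0)"
    by (intro DERIV_add DERIV_cmult DERIV_mult DERIV_cdivide DERIV_minus v_avg_deriv)
  have "eventually (\<lambda>y. 1 / D * Q y + (- v_avg y / (4 * D)) * T y
      = integral {0..\<rho> y} (\<lambda>r. g y r * \<eta> y r)) (nhds y0)"
    using eventually_near_y0 by (rule eventually_mono) (simp add: integral_mult_\<eta>_eq[OF g_cont] Q_def T_def)
  with deriv have deriv': "((\<lambda>y. integral {0..\<rho> y} (\<lambda>r. g y r * \<eta> y r)) has_real_derivative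
      1 / D * (Q' + \<rho>' * (g y0 ?r0 * ?A y0 ?r0))
      + ((- v_avg' / (4 * D)) * T y0 + (T' + \<rho>' * (g y0 ?r0 * ?r0^2)) * (- v_avg y0 / (4 * D)))) (at y0)"
    by (subst (asm) DERIV_cong_ev[OF refl _ refl])
  have boundary_eq: "\<eta> y0 ?r0 = (?A y0 ?r0 - v_avg y0 * ?r0^2 / 4) / D"
    using \<eta>_eq[OF y0_in_params, of ?r0] \<delta>_pos \<rho>_pos[of y0] by simp
  have "{0..?r0} \<subseteq> radii"
    using \<delta>_pos by auto
  note integral_eq = integral_mult_\<eta>'_eq[OF g_cont gy_cont this]
  show ?thesis
    by (rule DERIV_cong[OF deriv'])
       (use D_pos in \<open>simp add: integral_eq boundary_eq Q'_def T'_def T_def field_simps\<close>)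
qed

definition \<eta>_avg :: "real \<Rightarrow> real" where
  "\<eta>_avg y = 2 / (\<rho> y)^2 * integral {0..\<rho> y} (\<lambda>r. \<eta> y r * r)"

definition \<eta>_avg' :: real where "\<eta>_avg' = deriv \<eta>_avg y0"

definition \<eta>_tilde :: "real \<Rightarrow> real \<Rightarrow> real" where "\<eta>_tilde y r = \<eta> y r - \<eta>_avg y"

definition \<eta>_tilde' :: "real \<Rightarrow> real" where "\<eta>_tilde' r = \<eta>' r - \<eta>_avg'"

lemma \<eta>_avg_deriv: "(\<eta>_avg has_real_derivative \<eta>_avg') (at y0)"
proof -
  have "((\<lambda>y. integral {0..\<rho> y} (\<lambda>r. r * \<eta> y r)) has_real_derivative
      integral {0..\<rho> y0} (\<lambda>r. 0 * \<eta> y0 r + r * \<eta>' r) + \<rho>' * (\<rho> y0 * \<eta> y0 (\<rho> y0))) (at y0)"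
    by (rule has_real_derivative_integral_mult_\<eta>) (auto simp: split_beta' intro!: continuous_intros)
  then have "((\<lambda>y. integral {0..\<rho> y} (\<lambda>r. \<eta> y r * r)) has_real_derivative
      integral {0..\<rho> y0} (\<lambda>r. r * \<eta>' r) + \<rho>' * (\<rho> y0 * \<eta> y0 (\<rho> y0))) (at y0)"
    by (simp add: mult.commute)
  then show ?thesis
    unfolding \<eta>_avg'_def \<eta>_avg_def[abs_def] by (rule has_real_derivative_radial_average)
qed

lemma \<eta>_tilde_deriv: "r \<in> radii \<Longrightarrow> ((\<lambda>y. \<eta>_tilde y r) has_real_derivative \<eta>_tilde' r) (at y0)"
  unfolding \<eta>_tilde_def[abs_def] \<eta>_tilde'_def by (intro DERIV_diff \<eta>_deriv \<eta>_avg_deriv)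

lemma \<eta>_tilde_cont: "y \<in> params \<Longrightarrow> continuous_on radii (\<eta>_tilde y)"
  using \<eta>_cont unfolding \<eta>_tilde_def[abs_def] by (intro continuous_intros) auto

lemma \<eta>_tilde'_cont: "continuous_on radii \<eta>_tilde'"
  using \<eta>'_cont unfolding \<eta>_tilde'_def[abs_def] by (intro continuous_intros) auto

lemma integral_\<eta>_tilde_zero:
  assumes "y \<in> params" "{0..\<rho> y} \<subseteq> radii"
  shows "integral {0..\<rho> y} (\<lambda>r. r * \<eta>_tilde y r) = 0"
proof -
  have "continuous_on {0..\<rho> y} (\<eta> y)"
    using \<eta>_cont[OF assms(1)] assms(2) by (rule continuous_on_subset)
  then have "integral {0..\<rho> y} (\<lambda>r. r * \<eta>_tilde y r)
      = 1 * integral {0..\<rho> y} (\<lambda>r. \<eta> y r * r) + (- \<eta>_avg y) * integral {0..\<rho> y} (\<lambda>r. r)"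
    by (intro integral_linear_combination2 integrable_continuous_real continuous_intros)
       (auto simp: \<eta>_tilde_def algebra_simps)
  also have "\<dots> = 0"
    using \<rho>_pos[of y] by (simp add: \<eta>_avg_def)
  finally show ?thesis .
qed

lemma integral_flux_eq:
  assumes "y \<in> params" "{0..\<rho> y} \<subseteq> radii"
  shows "integral {0..\<rho> y} (\<lambda>r. r * v y r * \<eta>_tilde y r)
           = integral {0..\<rho> y} (\<lambda>r. \<eta> y r * (v y r - v_avg y) * r)"
proof -
  have "continuous_on {0..\<rho> y} (\<eta> y)" "continuous_on {0..\<rho> y} (v y)"
    using \<eta>_cont[OF assms(1)] continuous_on_section[OF v_cont assms] assms(2)
    by (auto intro: continuous_on_subset)
  then have i: "(\<lambda>r. r * v y r * \<eta> y r) integrable_on {0..\<rho> y}"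
    "(\<lambda>r. v y r * r) integrable_on {0..\<rho> y}" "(\<lambda>r. \<eta> y r * r) integrable_on {0..\<rho> y}"
    by (auto intro!: integrable_continuous_real continuous_intros)
  have "integral {0..\<rho> y} (\<lambda>r. r * v y r * \<eta>_tilde y r)
        = 1 * integral {0..\<rho> y} (\<lambda>r. r * v y r * \<eta> y r) + (- \<eta>_avg y) * integral {0..\<rho> y} (\<lambda>r. v y r * r)"
      "integral {0..\<rho> y} (\<lambda>r. \<eta> y r * (v y r - v_avg y) * r)
        = 1 * integral {0..\<rho> y} (\<lambda>r. r * v y r * \<eta> y r) + (- v_avg y) * integral {0..\<rho> y} (\<lambda>r. \<eta> y r * r)"
    by (rule integral_linear_combination2[OF i(1,2)] integral_linear_combination2[OF i(1,3)],
        simp add: \<eta>_tilde_def algebra_simps)+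
  then show ?thesis
    by (simp add: \<eta>_avg_def v_avg_def)
qed

lemma integral_mult_\<eta>_tilde_eq:
  assumes g_cont: "continuous_on (params \<times> radii) (\<lambda>(y, r). g y r)"
    and y: "y \<in> params" and sub: "{0..b} \<subseteq> radii"
  shows "integral {0..b} (\<lambda>r. g y r * \<eta>_tilde y r)
           = integral {0..b} (\<lambda>r. g y r * \<eta> y r) - \<eta>_avg y * integral {0..b} (g y)"
proof -
  have "continuous_on {0..b} (g y)" "continuous_on {0..b} (\<eta> y)"
    using continuous_on_section[OF g_cont y sub] \<eta>_cont[OF y] sub by (auto intro: continuous_on_subset)
  then have "integral {0..b} (\<lambda>r. g y r * \<eta>_tilde y r)
      = 1 * integral {0..b} (\<lambda>r. g y r * \<eta> y r) + (- \<eta>_avg y) * integral {0..b} (g y)"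
    by (intro integral_linear_combination2 integrable_continuous_real continuous_intros)
       (auto simp: \<eta>_tilde_def algebra_simps)
  then show ?thesis by simp
qed

lemma integral_mult_\<eta>_tilde'_eq:
  assumes g_cont: "continuous_on (params \<times> radii) (\<lambda>(y, r). g y r)"
    and gy_cont: "continuous_on (params \<times> radii) (\<lambda>(y, r). gy y r)"
    and sub: "{0..b} \<subseteq> radii"
  shows "integral {0..b} (\<lambda>r. gy y0 r * \<eta>_tilde y0 r + g y0 r * \<eta>_tilde' r)
           = integral {0..b} (\<lambda>r. gy y0 r * \<eta> y0 r + g y0 r * \<eta>' r)
             - \<eta>_avg y0 * integral {0..b} (gy y0) - \<eta>_avg' * integral {0..b} (g y0)"
proof -
  have "continuous_on {0..b} (g y0)" "continuous_on {0..b} (gy y0)"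
    "continuous_on {0..b} (\<eta> y0)" "continuous_on {0..b} \<eta>'"
    using continuous_on_section[OF g_cont y0_in_params sub] continuous_on_section[OF gy_cont y0_in_params sub]
      \<eta>_cont[OF y0_in_params] \<eta>'_cont sub by (auto intro: continuous_on_subset)
  then have "(\<lambda>r. gy y0 r * \<eta> y0 r + g y0 r * \<eta>' r) integrable_on {0..b}"
    "gy y0 integrable_on {0..b}" "g y0 integrable_on {0..b}"
    by (auto intro!: integrable_continuous_real continuous_intros)
  then have "integral {0..b} (\<lambda>r. gy y0 r * \<eta>_tilde y0 r + g y0 r * \<eta>_tilde' r)
      = 1 * integral {0..b} (\<lambda>r. gy y0 r * \<eta> y0 r + g y0 r * \<eta>' r)
        + (- \<eta>_avg y0) * integral {0..b} (gy y0) + (- \<eta>_avg') * integral {0..b} (g y0)"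
    by (rule integral_linear_combination3) (simp add: \<eta>_tilde_def \<eta>_tilde'_def algebra_simps)
  then show ?thesis by simp
qed

lemma has_real_derivative_integral_mult_\<eta>_tilde:
  assumes g_cont: "continuous_on (params \<times> radii) (\<lambda>(y, r). g y r)"
    and gy_cont: "continuous_on (params \<times> radii) (\<lambda>(y, r). gy y r)"
    and g_deriv: "\<And>y r. y \<in> params \<Longrightarrow> r \<in> radii \<Longrightarrow>
        ((\<lambda>y. g y r) has_real_derivative gy y r) (at y within params)"
  shows "((\<lambda>y. integral {0..\<rho> y} (\<lambda>r. g y r * \<eta>_tilde y r)) has_real_derivative
           integral {0..\<rho> y0} (\<lambda>r. gy y0 r * \<eta>_tilde y0 r + g y0 r * \<eta>_tilde' r)
           + \<rho>' * (g y0 (\<rho> y0) * \<eta>_tilde y0 (\<rho> y0))) (at y0)"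
proof -
  let ?r0 = "\<rho> y0"
  define G where "G y = integral {0..\<rho> y} (g y)" for y
  have "((\<lambda>y. integral {0..\<rho> y} (\<lambda>r. g y r * \<eta> y r) - \<eta>_avg y * G y) has_real_derivative
      (integral {0..?r0} (\<lambda>r. gy y0 r * \<eta> y0 r + g y0 r * \<eta>' r) + \<rho>' * (g y0 ?r0 * \<eta> y0 ?r0))
      - (\<eta>_avg' * G y0 + (integral {0..?r0} (gy y0) + \<rho>' * g y0 ?r0) * \<eta>_avg y0)) (at y0)"
    unfolding G_def
    by (intro DERIV_diff DERIV_mult \<eta>_avg_deriv has_real_derivative_integral_mult_\<eta>
        has_real_derivative_integral_moving g_cont gy_cont g_deriv)
  moreover have "eventually (\<lambda>y. integral {0..\<rho> y} (\<lambda>r. g y r * \<eta> y r) - \<eta>_avg y * G y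
      = integral {0..\<rho> y} (\<lambda>r. g y r * \<eta>_tilde y r)) (nhds y0)"
    using eventually_near_y0 by (rule eventually_mono) (simp add: integral_mult_\<eta>_tilde_eq[OF g_cont] G_def)
  ultimately have "((\<lambda>y. integral {0..\<rho> y} (\<lambda>r. g y r * \<eta>_tilde y r)) has_real_derivative
      (integral {0..?r0} (\<lambda>r. gy y0 r * \<eta> y0 r + g y0 r * \<eta>' r) + \<rho>' * (g y0 ?r0 * \<eta> y0 ?r0))
      - (\<eta>_avg' * G y0 + (integral {0..?r0} (gy y0) + \<rho>' * g y0 ?r0) * \<eta>_avg y0)) (at y0)"
    by (subst (asm) DERIV_cong_ev[OF refl _ refl])
  moreover have "{0..?r0} \<subseteq> radii"
    using \<delta>_pos by auto
  ultimately show ?thesis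
    by (elim DERIV_cong)
       (simp add: integral_mult_\<eta>_tilde'_eq[OF g_cont gy_cont] G_def \<eta>_tilde_def[of y0 ?r0] algebra_simps)
qed

lemma integral_mult_\<eta>_tilde':
  "integral {0..\<rho> y0} (\<lambda>r. r * \<eta>_tilde' r) = - \<rho>' * \<rho> y0 * \<eta>_tilde y0 (\<rho> y0)"
proof -
  have "((\<lambda>y. integral {0..\<rho> y} (\<lambda>r. r * \<eta>_tilde y r)) has_real_derivative
      integral {0..\<rho> y0} (\<lambda>r. 0 * \<eta>_tilde y0 r + r * \<eta>_tilde' r)
      + \<rho>' * (\<rho> y0 * \<eta>_tilde y0 (\<rho> y0))) (at y0)"
    by (rule has_real_derivative_integral_mult_\<eta>_tilde) (auto simp: split_beta' intro!: continuous_intros)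
  moreover have "eventually (\<lambda>y. integral {0..\<rho> y} (\<lambda>r. r * \<eta>_tilde y r) = 0) (nhds y0)"
    using eventually_near_y0 by (rule eventually_mono) (use integral_\<eta>_tilde_zero in blast)
  ultimately have "((\<lambda>y. 0) has_real_derivative
      integral {0..\<rho> y0} (\<lambda>r. r * \<eta>_tilde' r) + \<rho>' * (\<rho> y0 * \<eta>_tilde y0 (\<rho> y0))) (at y0)"
    by (subst (asm) DERIV_cong_ev[OF refl _ refl]) auto
  then show ?thesis
    using DERIV_unique[OF _ DERIV_const] by (fastforce simp: algebra_simps)
qed

end

section \<open>The balance over a cross-section\<close>

definition eta_tilde :: "real \<Rightarrow> (real \<Rightarrow> real \<Rightarrow> real) \<Rightarrow> (real \<Rightarrow> real \<Rightarrow> real \<Rightarrow> real) \<Rightarrow>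
    real \<Rightarrow> real \<Rightarrow> real \<Rightarrow> real" where
  "eta_tilde D R Vx x r t = eta D R Vx x r t - ravg R (eta D R Vx) x t"

locale taylor_dispersion =
  fixes R C G2 :: "real \<Rightarrow> real \<Rightarrow> real" and Vx Vr W2 :: "real \<Rightarrow> real \<Rightarrow> real \<Rightarrow> real"
    and D :: real
  assumes R_pos: "\<And>x t. R x t > 0"
    and R_smooth: "smooth_on (\<lambda>(x, t). R x t) UNIV"
    and Vx_smooth: "smooth_near (\<lambda>(x, r, t). Vx x r t) {(x, r, t). 0 \<le> r \<and> r \<le> R x t}"
    and Vr_smooth: "smooth_near (\<lambda>(x, r, t). Vr x r t) {(x, r, t). 0 \<le> r \<and> r \<le> R x t}"
    and incompressible: "\<And>x r t. 0 \<le> r \<Longrightarrow> r \<le> R x t \<Longrightarrow>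
         pdr (\<lambda>x r t. r * Vr x r t) x r t + r * pdx Vx x r t = 0"
    and streamline: "\<And>x t. pdt2 R x t + Vx x (R x t) t * pdx2 R x t = Vr x (R x t) t"
    and D_pos: "D > 0"
    and C_smooth: "smooth_on (\<lambda>(x, t). C x t) UNIV"
    and W2_smooth: "smooth_near (\<lambda>(x, r, t). W2 x r t) {(x, r, t). 0 \<le> r \<and> r \<le> R x t}"
    and W2_wall: "\<And>x t. pdr W2 x (R x t) t = 0"
    and W2_eq: "\<And>x r t. 0 < r \<Longrightarrow> r \<le> R x t \<Longrightarrow>
         Lop D W2 x r t =
           pdt (\<lambda>x r t. pdx2 C x t * eta_tilde D R Vx x r t) x r t
           + G2 x t
           - eta_tilde D R Vx x r t * pdx2 (\<lambda>x t. pdx2 C x t * ravg R Vx x t) x t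
           + Vx x r t * pdx (\<lambda>x r t. pdx2 C x t * eta_tilde D R Vx x r t) x r t
           + Vr x r t * pdx2 C x t * pdr (eta_tilde D R Vx) x r t"

begin

abbreviation etat :: "real \<Rightarrow> real \<Rightarrow> real \<Rightarrow> real" where "etat \<equiv> eta_tilde D R Vx"

definition flux_density :: "real \<Rightarrow> real \<Rightarrow> real \<Rightarrow> real" where
  "flux_density x r t = (R x t)^2 * eta D R Vx x r t * (Vx x r t - ravg R Vx x t)"

end

locale taylor_dispersion_at = taylor_dispersion +
  fixes x0 t0 \<delta> :: real and U :: "(real \<times> real \<times> real) set"
  assumes \<delta>_pos: "\<delta> > 0" and U_open: "open U"
    and box_subset: "{x0-\<delta>..x0+\<delta>} \<times> {0..R x0 t0 + \<delta>} \<times> {t0-\<delta>..t0+\<delta>} \<subseteq> U"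
    and Vx_smooth_U: "smooth_on (\<lambda>(x, r, t). Vx x r t) U"
    and Vr_smooth_U: "smooth_on (\<lambda>(x, r, t). Vr x r t) U"
    and W2_smooth_U: "smooth_on (\<lambda>(x, r, t). W2 x r t) U"
begin

lemma in_U: "y \<in> {x0-\<delta>..x0+\<delta>} \<Longrightarrow> r \<in> {0..R x0 t0 + \<delta>} \<Longrightarrow> s \<in> {t0-\<delta>..t0+\<delta>} \<Longrightarrow> (y, r, s) \<in> U"
  using box_subset by blast

lemma continuous_on_box_x:
  assumes "continuous_on U (\<lambda>(x, r, t). f x r t)"
  shows "continuous_on ({x0-\<delta>..x0+\<delta>} \<times> {0..R x0 t0 + \<delta>}) (\<lambda>(y, r). f y r t0)"
proof -
  have "continuous_on ({x0-\<delta>..x0+\<delta>} \<times> {0..R x0 t0 + \<delta>}) (\<lambda>p. (\<lambda>(x, r, t). f x r t) (fst p, snd p, t0))"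
    using \<delta>_pos by (intro continuous_on_compose2[OF assms] continuous_intros) (auto intro: in_U)
  then show ?thesis by (simp add: split_beta')
qed

lemma continuous_on_box_t:
  assumes "continuous_on U (\<lambda>(x, r, t). f x r t)"
  shows "continuous_on ({t0-\<delta>..t0+\<delta>} \<times> {0..R x0 t0 + \<delta>}) (\<lambda>(s, r). f x0 r s)"
proof -
  have "continuous_on ({t0-\<delta>..t0+\<delta>} \<times> {0..R x0 t0 + \<delta>}) (\<lambda>p. (\<lambda>(x, r, t). f x r t) (x0, snd p, fst p))"
    using \<delta>_pos by (intro continuous_on_compose2[OF assms] continuous_intros) (auto intro: in_U)
  then show ?thesis by (simp add: split_beta')
qed

sublocale X: radial_family "\<lambda>y r. Vx y r t0" "\<lambda>y r. pdx Vx y r t0" "\<lambda>y. R y t0" "pdx2 R x0 t0" x0 \<delta> D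
proof
  show "((\<lambda>y. R y t0) has_real_derivative pdx2 R x0 t0) (at x0)"
    using has_real_derivative_pdx2 smooth_on_imp_differentiable[OF R_smooth] by blast
  show "continuous_on ({x0-\<delta>..x0+\<delta>} \<times> {0..R x0 t0 + \<delta>}) (\<lambda>(y, r). Vx y r t0)"
    by (rule continuous_on_box_x[OF smooth_on_imp_continuous_on[OF Vx_smooth_U U_open]])
  show "continuous_on ({x0-\<delta>..x0+\<delta>} \<times> {0..R x0 t0 + \<delta>}) (\<lambda>(y, r). pdx Vx y r t0)"
    by (rule continuous_on_box_x[OF smooth_on_imp_continuous_on[OF smooth_on_pdx[OF Vx_smooth_U U_open] U_open]])
  show "((\<lambda>y. Vx y r t0) has_real_derivative pdx Vx y r t0) (at y within {x0-\<delta>..x0+\<delta>})"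
    if "y \<in> {x0-\<delta>..x0+\<delta>}" "r \<in> {0..R x0 t0 + \<delta>}" for y r
    using has_real_derivative_pdx[OF smooth_on_imp_differentiable[OF Vx_smooth_U in_U[OF that]]] \<delta>_pos
    by (auto intro: has_field_derivative_at_within)
qed (use \<delta>_pos D_pos R_pos in auto)

sublocale T: radial_family "\<lambda>s r. Vx x0 r s" "\<lambda>s r. pdt Vx x0 r s" "\<lambda>s. R x0 s" "pdt2 R x0 t0" t0 \<delta> D
proof
  show "((\<lambda>s. R x0 s) has_real_derivative pdt2 R x0 t0) (at t0)"
    using has_real_derivative_pdt2 smooth_on_imp_differentiable[OF R_smooth] by blast
  show "continuous_on ({t0-\<delta>..t0+\<delta>} \<times> {0..R x0 t0 + \<delta>}) (\<lambda>(s, r). Vx x0 r s)"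
    by (rule continuous_on_box_t[OF smooth_on_imp_continuous_on[OF Vx_smooth_U U_open]])
  show "continuous_on ({t0-\<delta>..t0+\<delta>} \<times> {0..R x0 t0 + \<delta>}) (\<lambda>(s, r). pdt Vx x0 r s)"
    by (rule continuous_on_box_t[OF smooth_on_imp_continuous_on[OF smooth_on_pdt[OF Vx_smooth_U U_open] U_open]])
  show "((\<lambda>s. Vx x0 r s) has_real_derivative pdt Vx x0 r s) (at s within {t0-\<delta>..t0+\<delta>})"
    if "s \<in> {t0-\<delta>..t0+\<delta>}" "r \<in> {0..R x0 t0 + \<delta>}" for s r
    using has_real_derivative_pdt[OF smooth_on_imp_differentiable[OF Vx_smooth_U in_U[OF _ that(2,1)]]] \<delta>_pos
    by (auto intro: has_field_derivative_at_within)
qed (use \<delta>_pos D_pos R_pos in auto)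

lemma X_v_avg: "X.v_avg y = ravg R Vx y t0"
  by (simp add: X.v_avg_def ravg_def)

lemma X_\<eta>: "X.\<eta> y r = eta D R Vx y r t0"
  by (simp add: X.\<eta>_def X_v_avg eta_def)

lemma X_\<eta>_tilde: "X.\<eta>_tilde y r = etat y r t0"
  by (simp add: X.\<eta>_tilde_def X.\<eta>_avg_def X_\<eta> eta_tilde_def ravg_def)

lemma T_\<eta>_tilde: "T.\<eta>_tilde s r = etat x0 r s"
  by (simp add: T.\<eta>_tilde_def T.\<eta>_avg_def T.\<eta>_def T.v_avg_def eta_tilde_def eta_def ravg_def)

lemma Cx_differentiable: "(\<lambda>(x, t). pdx2 C x t) differentiable (at p)"
  using smooth_on_imp_differentiable[OF smooth_on_pdx2[OF C_smooth open_UNIV]] by simp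

lemma pdt_Cx_etat:
  assumes "r \<in> {0..R x0 t0 + \<delta>}"
  shows "pdt (\<lambda>x r t. pdx2 C x t * etat x r t) x0 r t0
           = pdt2 (pdx2 C) x0 t0 * etat x0 r t0 + pdx2 C x0 t0 * T.\<eta>_tilde' r"
proof -
  have "((\<lambda>s. pdx2 C x0 s * etat x0 r s) has_real_derivative
      pdt2 (pdx2 C) x0 t0 * etat x0 r t0 + T.\<eta>_tilde' r * pdx2 C x0 t0) (at t0)"
    using T.\<eta>_tilde_deriv[OF assms] unfolding T_\<eta>_tilde
    by (intro DERIV_mult has_real_derivative_pdt2 Cx_differentiable)
  then show ?thesis
    unfolding pdt_def by (simp add: DERIV_imp_deriv mult.commute)
qed

lemma pdx_Cx_etat:
  assumes "r \<in> {0..R x0 t0 + \<delta>}"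
  shows "pdx (\<lambda>x r t. pdx2 C x t * etat x r t) x0 r t0
           = pdx2 (pdx2 C) x0 t0 * etat x0 r t0 + pdx2 C x0 t0 * X.\<eta>_tilde' r"
proof -
  have "((\<lambda>y. pdx2 C y t0 * etat y r t0) has_real_derivative
      pdx2 (pdx2 C) x0 t0 * etat x0 r t0 + X.\<eta>_tilde' r * pdx2 C x0 t0) (at x0)"
    using X.\<eta>_tilde_deriv[OF assms] unfolding X_\<eta>_tilde
    by (intro DERIV_mult has_real_derivative_pdx2 Cx_differentiable)
  then show ?thesis
    unfolding pdx_def by (simp add: DERIV_imp_deriv mult.commute)
qed

lemma etat_rderiv:
  assumes "r \<in> {0<..<R x0 t0 + \<delta>}"
  shows "((\<lambda>s. etat x0 s t0) has_real_derivative pdr etat x0 r t0) (at r)"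
proof -
  have "((\<lambda>s. X.\<eta> x0 s - X.\<eta>_avg x0) has_real_derivative
      (r * X.moment x0 r - X.v_avg x0 * r / 2) / D - 0) (at r)"
    by (intro DERIV_diff X.\<eta>_rderiv assms DERIV_const)
  then have "(\<lambda>s. etat x0 s t0) differentiable (at r)"
    unfolding real_differentiable_def X_\<eta>_tilde[symmetric] X.\<eta>_tilde_def by blast
  then show ?thesis
    unfolding pdr_def DERIV_deriv_iff_real_differentiable .
qed

lemma x0_t0_in_box: "x0 \<in> {x0-\<delta>..x0+\<delta>}" "t0 \<in> {t0-\<delta>..t0+\<delta>}"
  using \<delta>_pos by auto

lemma radius_subset: "{0..R x0 t0} \<subseteq> {0..R x0 t0 + \<delta>}"
  using \<delta>_pos by auto

lemma continuous_on_radius: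
  assumes "continuous_on U (\<lambda>(x, r, t). f x r t)"
  shows "continuous_on {0..R x0 t0} (\<lambda>r. f x0 r t0)"
  using continuous_on_section[OF continuous_on_box_x[OF assms] x0_t0_in_box(1) radius_subset] .

lemma in_U_radius: "r \<in> {0..R x0 t0} \<Longrightarrow> (x0, r, t0) \<in> U"
  using in_U[OF x0_t0_in_box(1) _ x0_t0_in_box(2)] radius_subset by blast

lemma has_integral_r_Lop: "((\<lambda>r. r * Lop D W2 x0 r t0) has_integral 0) {0..R x0 t0}"
proof -
  have smooth: "smooth_on (\<lambda>(x, r, t). pdr W2 x r t) U"
    by (rule smooth_on_pdr[OF W2_smooth_U U_open])
  have "((\<lambda>r. r * (pdr (pdr W2) x0 r t0 + (1 / r) * pdr W2 x0 r t0)) has_integral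
      R x0 t0 * pdr W2 x0 (R x0 t0) t0) {0..R x0 t0}"
  proof (rule has_integral_radial_laplacian[where f = "\<lambda>r. pdr W2 x0 r t0"])
    show "continuous_on {0..R x0 t0} (\<lambda>r. pdr W2 x0 r t0)"
      by (rule continuous_on_radius[OF smooth_on_imp_continuous_on[OF smooth U_open]])
    show "((\<lambda>r. pdr W2 x0 r t0) has_real_derivative pdr (pdr W2) x0 r t0) (at r)"
      if "r \<in> {0<..<R x0 t0}" for r
      using that by (intro has_real_derivative_pdr smooth_on_imp_differentiable[OF smooth] in_U_radius) auto
  qed (use R_pos in \<open>simp add: less_imp_le\<close>)
  from has_integral_mult_right[OF this, of D]
  have "((\<lambda>r. D * (r * (pdr (pdr W2) x0 r t0 + (1 / r) * pdr W2 x0 r t0))) has_integral 0) {0..R x0 t0}"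
    using W2_wall by simp
  moreover have "(\<lambda>r. D * (r * (pdr (pdr W2) x0 r t0 + (1 / r) * pdr W2 x0 r t0)))
      = (\<lambda>r. r * Lop D W2 x0 r t0)"
    by (simp add: Lop_def fun_eq_iff mult.left_commute)
  ultimately show ?thesis by simp
qed

lemma has_integral_flux_by_parts_at:
  "((\<lambda>r. r * Vr x0 r t0 * pdr etat x0 r t0 - r * pdx Vx x0 r t0 * etat x0 r t0) has_integral
     R x0 t0 * Vr x0 (R x0 t0) t0 * etat x0 (R x0 t0) t0) {0..R x0 t0}"
proof (rule has_integral_flux_by_parts[where w = "\<lambda>r. Vr x0 r t0" and g = "\<lambda>r. etat x0 r t0"])
  show "continuous_on {0..R x0 t0} (\<lambda>r. Vr x0 r t0)"
    by (rule continuous_on_radius[OF smooth_on_imp_continuous_on[OF Vr_smooth_U U_open]])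
  show "continuous_on {0..R x0 t0} (\<lambda>r. etat x0 r t0)"
    using X.\<eta>_tilde_cont[OF X.y0_in_params] radius_subset unfolding X_\<eta>_tilde
    by (rule continuous_on_subset)
  show "((\<lambda>s. etat x0 s t0) has_real_derivative pdr etat x0 r t0) (at r)" if "r \<in> {0<..<R x0 t0}" for r
    by (rule etat_rderiv) (use that \<delta>_pos in auto)
  fix r assume r: "r \<in> {0<..<R x0 t0}"
  have "(x0, r, t0) \<in> U"
    using r by (intro in_U_radius) auto
  then have "((\<lambda>s. s * Vr x0 s t0) has_real_derivative 1 * Vr x0 r t0 + pdr Vr x0 r t0 * r) (at r)"
    by (intro DERIV_mult DERIV_ident has_real_derivative_pdr smooth_on_imp_differentiable[OF Vr_smooth_U])
  moreover from this have "pdr (\<lambda>x r t. r * Vr x r t) x0 r t0 = 1 * Vr x0 r t0 + pdr Vr x0 r t0 * r"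
    unfolding pdr_def by (rule DERIV_imp_deriv)
  ultimately show "((\<lambda>s. s * Vr x0 s t0) has_real_derivative - (r * pdx Vx x0 r t0)) (at r)"
    using incompressible[of r x0 t0] r by (elim DERIV_cong) simp
qed (use R_pos in \<open>simp add: less_imp_le\<close>)

lemma has_integral_r_etat: "((\<lambda>r. r * etat x0 r t0) has_integral 0) {0..R x0 t0}"
proof -
  have "continuous_on {0..R x0 t0} (\<lambda>r. etat x0 r t0)"
    using X.\<eta>_tilde_cont[OF X.y0_in_params] radius_subset unfolding X_\<eta>_tilde
    by (rule continuous_on_subset)
  then have "(\<lambda>r. r * etat x0 r t0) integrable_on {0..R x0 t0}"
    by (intro integrable_continuous_real continuous_on_mult continuous_on_id)
  moreover have "integral {0..R x0 t0} (\<lambda>r. r * etat x0 r t0) = 0"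
    using X.integral_\<eta>_tilde_zero[OF X.y0_in_params radius_subset] by (simp add: X_\<eta>_tilde)
  ultimately show ?thesis
    by (metis has_integral_integral)
qed

lemma has_integral_r_etat_t:
  "((\<lambda>r. r * T.\<eta>_tilde' r) has_integral - pdt2 R x0 t0 * R x0 t0 * etat x0 (R x0 t0) t0) {0..R x0 t0}"
proof -
  have "continuous_on {0..R x0 t0} T.\<eta>_tilde'"
    using T.\<eta>_tilde'_cont radius_subset by (rule continuous_on_subset)
  then have "(\<lambda>r. r * T.\<eta>_tilde' r) integrable_on {0..R x0 t0}"
    by (intro integrable_continuous_real continuous_on_mult continuous_on_id)
  moreover have "integral {0..R x0 t0} (\<lambda>r. r * T.\<eta>_tilde' r) = - pdt2 R x0 t0 * R x0 t0 * etat x0 (R x0 t0) t0"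
    using T.integral_mult_\<eta>_tilde' by (simp add: T_\<eta>_tilde)
  ultimately show ?thesis
    by (metis has_integral_integral)
qed

definition flux :: "real \<Rightarrow> real" where
  "flux y = integral {0..R y t0} (\<lambda>r. r * Vx y r t0 * etat y r t0)"

definition flux' :: real where
  "flux' = integral {0..R x0 t0} (\<lambda>r. r * pdx Vx x0 r t0 * etat x0 r t0 + r * Vx x0 r t0 * X.\<eta>_tilde' r)
     + pdx2 R x0 t0 * (R x0 t0 * Vx x0 (R x0 t0) t0 * etat x0 (R x0 t0) t0)"

lemma flux_deriv: "(flux has_real_derivative flux') (at x0)"
proof -
  have "((\<lambda>y. integral {0..R y t0} (\<lambda>r. (r * Vx y r t0) * X.\<eta>_tilde y r)) has_real_derivative
      integral {0..R x0 t0} (\<lambda>r. (r * pdx Vx x0 r t0) * X.\<eta>_tilde x0 r + (r * Vx x0 r t0) * X.\<eta>_tilde' r)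
      + pdx2 R x0 t0 * ((R x0 t0 * Vx x0 (R x0 t0) t0) * X.\<eta>_tilde x0 (R x0 t0))) (at x0)"
  proof (rule X.has_real_derivative_integral_mult_\<eta>_tilde)
    show "continuous_on (X.params \<times> X.radii) (\<lambda>(y, r). r * Vx y r t0)"
      using X.v_cont unfolding split_beta' by (intro continuous_intros)
    show "continuous_on (X.params \<times> X.radii) (\<lambda>(y, r). r * pdx Vx y r t0)"
      using X.vy_cont unfolding split_beta' by (intro continuous_intros)
    show "((\<lambda>y. r * Vx y r t0) has_real_derivative r * pdx Vx y r t0) (at y within X.params)"
      if "y \<in> X.params" "r \<in> X.radii" for y r
      using X.v_deriv[OF that] by (rule DERIV_cmult)
  qed
  then show ?thesis
    unfolding flux_def[abs_def] flux'_def X_\<eta>_tilde by (simp add: mult.assoc)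
qed

lemma ravg_flux_density: "eventually (\<lambda>y. ravg R flux_density y t0 = 2 * flux y) (nhds x0)"
  using X.eventually_near_y0
proof (rule eventually_mono, elim conjE)
  fix y assume "y \<in> X.params" "{0..R y t0} \<subseteq> X.radii"
  from X.integral_flux_eq[OF this] have "flux y = integral {0..R y t0}
      (\<lambda>r. eta D R Vx y r t0 * (Vx y r t0 - ravg R Vx y t0) * r)"
    by (simp add: flux_def X_\<eta>_tilde X_\<eta> X_v_avg)
  moreover have "(\<lambda>r. (R y t0)^2 * eta D R Vx y r t0 * (Vx y r t0 - ravg R Vx y t0) * r)
      = (\<lambda>r. (R y t0)^2 * (eta D R Vx y r t0 * (Vx y r t0 - ravg R Vx y t0) * r))"
    by (simp add: fun_eq_iff mult.assoc)
  ultimately show "ravg R flux_density y t0 = 2 * flux y"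
    using R_pos[of y t0] by (simp add: ravg_def flux_density_def)
qed

lemma pdx2_flux:
  "pdx2 (\<lambda>x t. pdx2 C x t * ravg R flux_density x t) x0 t0
     = 2 * (pdx2 (pdx2 C) x0 t0 * flux x0 + pdx2 C x0 t0 * flux')"
proof -
  have "((\<lambda>y. pdx2 C y t0 * (2 * flux y)) has_real_derivative
      pdx2 (pdx2 C) x0 t0 * (2 * flux x0) + 2 * flux' * pdx2 C x0 t0) (at x0)"
    by (intro DERIV_mult DERIV_cmult flux_deriv has_real_derivative_pdx2 Cx_differentiable)
  moreover have "eventually (\<lambda>y. pdx2 C y t0 * (2 * flux y) = pdx2 C y t0 * ravg R flux_density y t0)
      (nhds x0)"
    using ravg_flux_density by (rule eventually_mono) simp
  ultimately have "((\<lambda>y. pdx2 C y t0 * ravg R flux_density y t0) has_real_derivative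
      pdx2 (pdx2 C) x0 t0 * (2 * flux x0) + 2 * flux' * pdx2 C x0 t0) (at x0)"
    by (subst (asm) DERIV_cong_ev[OF refl _ refl])
  then show ?thesis
    unfolding pdx2_def by (simp add: DERIV_imp_deriv algebra_simps)
qed

lemma r_Lop_expansion:
  assumes "r \<in> {0..R x0 t0}"
  shows "r * Lop D W2 x0 r t0
    = pdt2 (pdx2 C) x0 t0 * (r * etat x0 r t0) + pdx2 C x0 t0 * (r * T.\<eta>_tilde' r) + G2 x0 t0 * r
      - pdx2 (\<lambda>x t. pdx2 C x t * ravg R Vx x t) x0 t0 * (r * etat x0 r t0)
      + pdx2 (pdx2 C) x0 t0 * (r * Vx x0 r t0 * etat x0 r t0)
      + pdx2 C x0 t0 * ((r * pdx Vx x0 r t0 * etat x0 r t0 + r * Vx x0 r t0 * X.\<eta>_tilde' r)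
                        + (r * Vr x0 r t0 * pdr etat x0 r t0 - r * pdx Vx x0 r t0 * etat x0 r t0))"
proof (cases "r = 0")
  case False
  then have r: "0 < r" "r \<le> R x0 t0" "r \<in> {0..R x0 t0 + \<delta>}"
    using assms \<delta>_pos by auto
  have Lop: "Lop D W2 x0 r t0
      = (pdt2 (pdx2 C) x0 t0 * etat x0 r t0 + pdx2 C x0 t0 * T.\<eta>_tilde' r) + G2 x0 t0
        - etat x0 r t0 * pdx2 (\<lambda>x t. pdx2 C x t * ravg R Vx x t) x0 t0
        + Vx x0 r t0 * (pdx2 (pdx2 C) x0 t0 * etat x0 r t0 + pdx2 C x0 t0 * X.\<eta>_tilde' r)
        + Vr x0 r t0 * pdx2 C x0 t0 * pdr etat x0 r t0"
    using W2_eq[OF r(1,2)] unfolding pdt_Cx_etat[OF r(3)] pdx_Cx_etat[OF r(3)] .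
  show ?thesis
    unfolding Lop by (simp add: algebra_simps)
qed simp

lemma has_integral_flux_terms:
  "((\<lambda>r. r * Vx x0 r t0 * etat x0 r t0) has_integral flux x0) {0..R x0 t0}"
  "((\<lambda>r. r * pdx Vx x0 r t0 * etat x0 r t0 + r * Vx x0 r t0 * X.\<eta>_tilde' r) has_integral
     flux' - pdx2 R x0 t0 * (R x0 t0 * Vx x0 (R x0 t0) t0 * etat x0 (R x0 t0) t0)) {0..R x0 t0}"
proof -
  note restrict = continuous_on_subset[OF _ radius_subset]
  have "continuous_on {0..R x0 t0} (\<lambda>r. Vx x0 r t0)" "continuous_on {0..R x0 t0} (\<lambda>r. pdx Vx x0 r t0)"
    "continuous_on {0..R x0 t0} (\<lambda>r. etat x0 r t0)" "continuous_on {0..R x0 t0} X.\<eta>_tilde'"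
    using restrict[OF continuous_on_section[OF X.v_cont X.y0_in_params order_refl]]
      restrict[OF continuous_on_section[OF X.vy_cont X.y0_in_params order_refl]]
      restrict[OF X.\<eta>_tilde_cont[OF X.y0_in_params]] restrict[OF X.\<eta>_tilde'_cont]
    by (simp_all add: X_\<eta>_tilde[abs_def])
  then have "(\<lambda>r. r * Vx x0 r t0 * etat x0 r t0) integrable_on {0..R x0 t0}"
    "(\<lambda>r. r * pdx Vx x0 r t0 * etat x0 r t0 + r * Vx x0 r t0 * X.\<eta>_tilde' r) integrable_on {0..R x0 t0}"
    by (auto intro!: integrable_continuous_real continuous_intros)
  then show "((\<lambda>r. r * Vx x0 r t0 * etat x0 r t0) has_integral flux x0) {0..R x0 t0}"
    "((\<lambda>r. r * pdx Vx x0 r t0 * etat x0 r t0 + r * Vx x0 r t0 * X.\<eta>_tilde' r) has_integral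
      flux' - pdx2 R x0 t0 * (R x0 t0 * Vx x0 (R x0 t0) t0 * etat x0 (R x0 t0) t0)) {0..R x0 t0}"
    by (auto dest!: integrable_integral simp: flux_def flux'_def)
qed

lemma G2_formula_at:
  "G2 x0 t0 = - (1 / (R x0 t0)^2) * pdx2 (\<lambda>x t. pdx2 C x t * ravg R flux_density x t) x0 t0"
proof -
  let ?R0 = "R x0 t0" and ?e = "etat x0 (R x0 t0) t0"
  have "((\<lambda>r. r * Lop D W2 x0 r t0) has_integral
      pdt2 (pdx2 C) x0 t0 * 0 + pdx2 C x0 t0 * (- pdt2 R x0 t0 * ?R0 * ?e) + G2 x0 t0 * ((?R0^2 - 0^2) / 2)
      - pdx2 (\<lambda>x t. pdx2 C x t * ravg R Vx x t) x0 t0 * 0 + pdx2 (pdx2 C) x0 t0 * flux x0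
      + pdx2 C x0 t0 * ((flux' - pdx2 R x0 t0 * (?R0 * Vx x0 ?R0 t0 * ?e)) + ?R0 * Vr x0 ?R0 t0 * ?e))
      {0..?R0}"
    by (subst has_integral_cong[OF r_Lop_expansion], assumption)
       (intro has_integral_add has_integral_diff has_integral_mult_right has_integral_r_etat
         has_integral_r_etat_t ident_has_integral has_integral_flux_terms has_integral_flux_by_parts_at
         less_imp_le[OF R_pos])
  \<comment> \<open>The wall terms cancel by the streamline condition.\<close>
  from has_integral_unique[OF has_integral_r_Lop this]
  have "G2 x0 t0 * ?R0^2 = - 2 * (pdx2 (pdx2 C) x0 t0 * flux x0 + pdx2 C x0 t0 * flux')"
    by (simp add: streamline[of x0 t0, symmetric] algebra_simps)
  then show ?thesis
    unfolding pdx2_flux using R_pos[of x0 t0] by (simp add: field_simps)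
qed

end

context taylor_dispersion begin

lemma common_smooth_neighbourhood:
  obtains U where "open U" "{(x, r, t). 0 \<le> r \<and> r \<le> R x t} \<subseteq> U"
    "smooth_on (\<lambda>(x, r, t). Vx x r t) U" "smooth_on (\<lambda>(x, r, t). Vr x r t) U"
    "smooth_on (\<lambda>(x, r, t). W2 x r t) U"
proof -
  obtain U1 where "open U1" "{(x, r, t). 0 \<le> r \<and> r \<le> R x t} \<subseteq> U1"
    "smooth_on (\<lambda>(x, r, t). Vx x r t) U1"
    using Vx_smooth unfolding smooth_near_def by blast
  moreover obtain U2 where "open U2" "{(x, r, t). 0 \<le> r \<and> r \<le> R x t} \<subseteq> U2"
    "smooth_on (\<lambda>(x, r, t). Vr x r t) U2"
    using Vr_smooth unfolding smooth_near_def by blast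
  moreover obtain U3 where "open U3" "{(x, r, t). 0 \<le> r \<and> r \<le> R x t} \<subseteq> U3"
    "smooth_on (\<lambda>(x, r, t). W2 x r t) U3"
    using W2_smooth unfolding smooth_near_def by blast
  ultimately show ?thesis
    using that[of "U1 \<inter> U2 \<inter> U3"] smooth_on_subset[of _ U1 "U1 \<inter> U2 \<inter> U3"]
      smooth_on_subset[of _ U2 "U1 \<inter> U2 \<inter> U3"] smooth_on_subset[of _ U3 "U1 \<inter> U2 \<inter> U3"]
    by blast
qed

lemma G2_formula:
  "G2 x t = - (1 / (R x t)^2) * pdx2 (\<lambda>x t. pdx2 C x t * ravg R flux_density x t) x t"
proof -
  obtain U where U: "open U" "{(x, r, t). 0 \<le> r \<and> r \<le> R x t} \<subseteq> U"
    "smooth_on (\<lambda>(x, r, t). Vx x r t) U" "smooth_on (\<lambda>(x, r, t). Vr x r t) U"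
    "smooth_on (\<lambda>(x, r, t). W2 x r t) U"
    by (rule common_smooth_neighbourhood)
  have "(x, r, t) \<in> U" if "r \<in> {0..R x t}" for r
    using U(2) that by auto
  then obtain \<delta> where "\<delta> > 0" "{x-\<delta>..x+\<delta>} \<times> {0..R x t + \<delta>} \<times> {t-\<delta>..t+\<delta>} \<subseteq> U"
    by (rule box_around_segment[OF U(1) less_imp_le[OF R_pos]])
  then interpret taylor_dispersion_at R C G2 Vx Vr W2 D x t \<delta> U
    using U by unfold_locales
  show ?thesis
    by (rule G2_formula_at)
qed

end

theorem mainTheorem2:
  fixes R C G2 :: "real \<Rightarrow> real \<Rightarrow> real"
    and Vx Vr W2 :: "real \<Rightarrow> real \<Rightarrow> real \<Rightarrow> real"
    and D :: real
  defines "\<Omega> \<equiv> {(x, r, t). 0 \<le> r \<and> r \<le> R x t}"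
    and "etat \<equiv> (\<lambda>x r t. eta D R Vx x r t - ravg R (eta D R Vx) x t)"
    and "Vxt \<equiv> (\<lambda>x r t. Vx x r t - ravg R Vx x t)"
  assumes Rpos: "\<And>x t. R x t > 0"
    and Rsmooth: "smooth_on (\<lambda>(x, t). R x t) UNIV"
    and Vxsmooth: "smooth_near (\<lambda>(x, r, t). Vx x r t) \<Omega>"
    and Vrsmooth: "smooth_near (\<lambda>(x, r, t). Vr x r t) \<Omega>"
    and incompressible:
      "\<And>x r t. 0 \<le> r \<Longrightarrow> r \<le> R x t \<Longrightarrow>
         pdr (\<lambda>x r t. r * Vr x r t) x r t + r * pdx Vx x r t = 0"
    and streamline:
      "\<And>x t. pdt2 R x t + Vx x (R x t) t * pdx2 R x t = Vr x (R x t) t"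
    and Dpos: "D > 0"
    and Csmooth: "smooth_on (\<lambda>(x, t). C x t) UNIV"
    and W2smooth: "smooth_near (\<lambda>(x, r, t). W2 x r t) \<Omega>"
    and W2axis: "\<And>x t. ((\<lambda>r. r * pdr W2 x r t) \<longlongrightarrow> 0) (at_right 0)"
    and W2wall: "\<And>x t. pdr W2 x (R x t) t = 0"
    and W2eq:
      "\<And>x r t. 0 < r \<Longrightarrow> r \<le> R x t \<Longrightarrow>
         Lop D W2 x r t =
           pdt (\<lambda>x r t. pdx2 C x t * etat x r t) x r t
           + G2 x t
           - etat x r t * pdx2 (\<lambda>x t. pdx2 C x t * ravg R Vx x t) x t
           + Vx x r t * pdx (\<lambda>x r t. pdx2 C x t * etat x r t) x r t
           + Vr x r t * pdx2 C x t * pdr etat x r t"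
  shows "\<And>x t. G2 x t =
           - (1 / (R x t)^2) *
             pdx2 (\<lambda>x t. pdx2 C x t *
                      ravg R (\<lambda>x r t. (R x t)^2 * eta D R Vx x r t * Vxt x r t) x t) x t"
proof -
  have etat: "etat = eta_tilde D R Vx"
    unfolding etat_def by (simp add: fun_eq_iff eta_tilde_def)
  interpret taylor_dispersion R C G2 Vx Vr W2 D
    using Rpos Rsmooth Vxsmooth[unfolded \<Omega>_def] Vrsmooth[unfolded \<Omega>_def] incompressible streamline
      Dpos Csmooth W2smooth[unfolded \<Omega>_def] W2wall W2eq[unfolded etat]
    by unfold_locales
  show "G2 x t = - (1 / (R x t)^2) *
      pdx2 (\<lambda>x t. pdx2 C x t * ravg R (\<lambda>x r t. (R x t)^2 * eta D R Vx x r t * Vxt x r t) x t) x t" for x t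
    unfolding Vxt_def using G2_formula unfolding flux_density_def[abs_def] .
qed

end
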